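(* Let $p>2$ and let $G_2$ be the spider graph consisting of a center $v_0$ and three legs $v_0x_1x_2\cdots x_p$, $v_0y_1y_2\cdots y_p$, $v_0z_1z_2\cdots z_p$ (paths with $p$ vertices each besides $v_0$); write $x_0=y_0=z_0=v_0$. Let $H_1,\dots,H_{3p}$ be connected graphs, each with at least two vertices, with $m_i=|V(H_i)|$ ordered so that $m_1\le m_2\le\dots\le m_{3p}$. Let $\Gamma=G_2\diamond(H_1,\dots,H_{3p})$ be the generalized edge corona in which, for each $k\in\{0,1,\dots,p-1\}$, every vertex of $H_{3k+1}$ is joined to $x_{p-k}$ and $x_{p-k-1}$, every vertex of $H_{3k+2}$ is joined to $y_{p-k}$ and $y_{p-k-1}$, and every vertex of $H_{3k+3}$ is joined to $z_{p-k}$ and $z_{p-k-1}$ (so $H_{3p-3}$ is the graph joined to $z_1$ and $z_2$, and $H_{3p-2}$ is the graph joined to $x_1$ and $v_0$). Suppose that (i) $\Delta(H_i)\le\delta(H_{i+1})$ for all $i\in\{1,\dots,3p-1\}$; (ii) $d'(x_p)\le\delta'(H_2)$, $d'(y_p)\le\delta'(H_3)$ and $d'(z_p)\le\delta'(H_4)$; (iii) $\Delta'(H_{3p-3})\le |V(H_4)|+1$; (iv) $d'(z_2)\le\delta'(H_{3p-2})$. Then $\Gamma$ is antimagic.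
   Context: All graphs are simple and undirected. A graph $G$ is antimagic if there is a bijection $f:E(G)\to\{1,2,\dots,|E(G)|\}$ such that the vertex sums $w(v)=\sum_{e\ni v}f(e)$ are pairwise distinct over all vertices $v$. For a graph $G$ with $m$ edges $e_1,\dots,e_m$ and graphs $H_1,\dots,H_m$, the generalized edge corona $G\diamond(H_1,\dots,H_m)$ is obtained from disjoint copies of $G,H_1,\dots,H_m$ by joining both end vertices of $e_i$ to every vertex of $H_i$, for each $i$. $\Delta(H)$ and $\delta(H)$ denote the maximum and minimum degree of $H$ itself. For a vertex $v$ of $\Gamma$, $d'(v)$ denotes its degree in $\Gamma$; $\Delta'(H_i)$ and $\delta'(H_i)$ denote the maximum and minimum of $d'(v)$ over $v\in V(H_i)$ (so $d'(v)=\deg_{H_i}(v)+2$ for $v\in V(H_i)$). *)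

theory Defs
  imports Main
begin

definition simple_graph :: "'a set \<Rightarrow> 'a set set \<Rightarrow> bool" where
  "simple_graph V E \<longleftrightarrow> finite V \<and> (\<forall>e\<in>E. \<exists>u v. u \<noteq> v \<and> u \<in> V \<and> v \<in> V \<and> e = {u, v})"

definition graph_connected :: "'a set \<Rightarrow> 'a set set \<Rightarrow> bool" where
  "graph_connected V E \<longleftrightarrow> (\<forall>u\<in>V. \<forall>v\<in>V. (u, v) \<in> {(x, y). {x, y} \<in> E}\<^sup>*)"

definition degree :: "'a set set \<Rightarrow> 'a \<Rightarrow> nat" where
  "degree E v = card {e \<in> E. v \<in> e}"

definition max_degree :: "'a set \<Rightarrow> 'a set set \<Rightarrow> nat" where
  "max_degree V E = Max (degree E ` V)"

definition min_degree :: "'a set \<Rightarrow> 'a set set \<Rightarrow> nat" where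
  "min_degree V E = Min (degree E ` V)"

definition vertex_sum :: "'a set set \<Rightarrow> ('a set \<Rightarrow> nat) \<Rightarrow> 'a \<Rightarrow> nat" where
  "vertex_sum E f v = (\<Sum>e\<in>{e \<in> E. v \<in> e}. f e)"

definition antimagic :: "'a set \<Rightarrow> 'a set set \<Rightarrow> bool" where
  "antimagic V E \<longleftrightarrow> (\<exists>f. bij_betw f E {1..card E} \<and> inj_on (vertex_sum E f) V)"

text \<open>Spider G_2: centre v_0 = Inl (0,0); leg l (0 = x, 1 = y, 2 = z) has vertices
  Inl (l, j) for 1 \<le> j \<le> p; position 0 on every leg is the centre.
  The copy of vertex v of H_i is Inr (i, v).\<close>

definition spv :: "nat \<Rightarrow> nat \<Rightarrow> (nat \<times> nat) + (nat \<times> 'a)" where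
  "spv l j = (if j = 0 then Inl (0, 0) else Inl (l, j))"

text \<open>H_i with i = 3k + l + 1 (k < p, l < 3) is joined to positions p - k and p - k - 1 on leg l.\<close>

definition att_leg :: "nat \<Rightarrow> nat" where "att_leg i = (i - 1) mod 3"
definition att_pos :: "nat \<Rightarrow> nat \<Rightarrow> nat" where "att_pos p i = p - (i - 1) div 3"

definition corona_V :: "nat \<Rightarrow> (nat \<Rightarrow> 'a set) \<Rightarrow> ((nat \<times> nat) + (nat \<times> 'a)) set" where
  "corona_V p VH = {spv l j | l j. l < 3 \<and> j \<le> p} \<union> {Inr (i, v) | i v. i \<in> {1..3*p} \<and> v \<in> VH i}"

definition corona_E :: "nat \<Rightarrow> (nat \<Rightarrow> 'a set) \<Rightarrow> (nat \<Rightarrow> 'a set set)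
    \<Rightarrow> ((nat \<times> nat) + (nat \<times> 'a)) set set" where
  "corona_E p VH EH =
     {{spv l j, spv l (Suc j)} | l j. l < 3 \<and> j < p}
   \<union> {{Inr (i, u), Inr (i, v)} | i u v. i \<in> {1..3*p} \<and> {u, v} \<in> EH i}
   \<union> {{Inr (i, v), spv (att_leg i) (att_pos p i)} | i v. i \<in> {1..3*p} \<and> v \<in> VH i}
   \<union> {{Inr (i, v), spv (att_leg i) (att_pos p i - 1)} | i v. i \<in> {1..3*p} \<and> v \<in> VH i}"

definition max_degree' :: "nat \<Rightarrow> (nat \<Rightarrow> 'a set) \<Rightarrow> (nat \<Rightarrow> 'a set set) \<Rightarrow> nat \<Rightarrow> nat" where
  "max_degree' p VH EH i = Max ((\<lambda>v. degree (corona_E p VH EH) (Inr (i, v))) ` VH i)"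

definition min_degree' :: "nat \<Rightarrow> (nat \<Rightarrow> 'a set) \<Rightarrow> (nat \<Rightarrow> 'a set set) \<Rightarrow> nat \<Rightarrow> nat" where
  "min_degree' p VH EH i = Min ((\<lambda>v. degree (corona_E p VH EH) (Inr (i, v))) ` VH i)"

end

theory Submission
  imports Defs "HOL-Library.Product_Lexorder"
begin

(* Group the vertices into layers, in the order
     H_1, x_p, H_2, y_p, H_3, z_p, H_4, ..., H_{3p-3}, the inner leg vertices (positions 2, ..., p-1),
     {x_1, y_1, z_1} together with H_{3p-2}, H_{3p-1}, H_{3p}, and v_0,
   and label the edges tier by tier so that vertex sums increase from each layer to the next: for
   consecutive layers, the edges at the lower vertex, apart from at most one edge shared with the
   upper vertex, are at most as many as some edges of strictly higher tier at the upper vertex.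
   The ordering of the m_i and conditions (i)-(iv) are exactly what these counts need. Inside a
   layer the inner leg vertices are separated by their position on the spider; every other vertex of
   a layer has exactly one incident edge in a tier common to the layer, and ordering the edges of
   that tier by the sum of the remaining labels at their vertex makes the vertex sums distinct. *)

definition rank :: "'k set \<Rightarrow> ('k \<Rightarrow> 'b::linorder) \<Rightarrow> 'k \<Rightarrow> nat" where
  "rank K key k = card {k' \<in> K. key k' < key k} + 1"

lemma rank_less_rank:
  assumes "finite K" "k \<in> K" "key k < key k'"
  shows "rank K key k < rank K key k'"
proof -
  have "{x \<in> K. key x < key k} \<subset> {x \<in> K. key x < key k'}"
    using assms(2,3) by (auto intro: less_trans)
  then show ?thesis
    unfolding rank_def using assms(1) by (simp add: psubset_card_mono)
qed

lemma bij_betw_rank: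
  assumes fin: "finite K" and inj: "inj_on key K"
  shows "bij_betw (rank K key) K {1..card K}"
proof -
  have inj_rank: "inj_on (rank K key) K"
  proof (rule inj_onI)
    fix a b assume ab: "a \<in> K" "b \<in> K" "rank K key a = rank K key b"
    then have "\<not> key a < key b" "\<not> key b < key a"
      using rank_less_rank[OF fin] by (metis less_irrefl)+
    then show "a = b" using inj ab by (metis inj_on_def linorder_neqE)
  qed
  have "rank K key ` K \<subseteq> {1..card K}"
  proof
    fix y assume "y \<in> rank K key ` K"
    then obtain k where k: "k \<in> K" "y = rank K key k" by auto
    have "{k' \<in> K. key k' < key k} \<subset> K" using k(1) by auto
    then have "card {k' \<in> K. key k' < key k} < card K" by (rule psubset_card_mono[OF fin])
    then show "y \<in> {1..card K}" using k(2) unfolding rank_def by simp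
  qed
  moreover have "card (rank K key ` K) = card {1..card K}"
    using inj_rank by (simp add: card_image)
  ultimately show ?thesis
    unfolding bij_betw_def using inj_rank by (simp add: card_subset_eq)
qed

lemma sum_le_sum_if_dominated:
  fixes f :: "'x \<Rightarrow> nat" and g :: "'y \<Rightarrow> nat"
  assumes card: "card A \<le> card B" and le: "\<And>a b. a \<in> A \<Longrightarrow> b \<in> B \<Longrightarrow> f a \<le> g b"
  shows "sum f A \<le> sum g B"
proof (cases "card A = 0")
  case True
  then have "sum f A = 0" by (cases "finite A") auto
  then show ?thesis by simp
next
  case False
  then have "card B > 0" using card by simp
  then have B: "finite B" "B \<noteq> {}" using card_gt_0_iff by blast+
  define m where "m = Min (g ` B)"
  have "m \<in> g ` B" unfolding m_def using B by simp
  then have "\<And>a. a \<in> A \<Longrightarrow> f a \<le> m" using le by blast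
  then have "sum f A \<le> card A * m" using sum_bounded_above[of A f m] by simp
  also have "\<dots> \<le> card B * m" using card by simp
  also have "\<dots> \<le> sum g B" using sum_bounded_below[of B m g] B unfolding m_def by simp
  finally show ?thesis .
qed

lemma sum_less_sum_if_dominated:
  fixes g :: "'x \<Rightarrow> nat"
  assumes B: "finite B" "B \<noteq> {}" and card: "card A \<le> card B"
    and less: "\<And>a b. a \<in> A \<Longrightarrow> b \<in> B \<Longrightarrow> g a < g b" and pos: "\<And>b. b \<in> B \<Longrightarrow> 0 < g b"
  shows "sum g A < sum g B"
proof (cases "card A = 0")
  case True
  then have "sum g A = 0" by (cases "finite A") auto
  moreover have "0 < sum g B" using B pos by (simp add: sum_pos)
  ultimately show ?thesis by simp
next
  case False
  have "sum (\<lambda>a. g a + 1) A \<le> sum g B"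
    by (rule sum_le_sum_if_dominated) (use card less in \<open>auto simp: Suc_le_eq\<close>)
  then have "sum g A + card A \<le> sum g B" by (simp add: sum_Suc)
  then show ?thesis using False by simp
qed

lemma inj_on_by_layers:
  fixes s :: "'v \<Rightarrow> 'b::linorder" and layer :: "'v \<Rightarrow> nat"
  assumes layers: "layer ` V = {..n}"
    and up: "\<And>u w. u \<in> V \<Longrightarrow> w \<in> V \<Longrightarrow> layer w = Suc (layer u) \<Longrightarrow> s u < s w"
    and within: "\<And>u w. u \<in> V \<Longrightarrow> w \<in> V \<Longrightarrow> layer u = layer w \<Longrightarrow> u \<noteq> w \<Longrightarrow> s u \<noteq> s w"
  shows "inj_on s V"
proof -
  have mono: "s u < s w" if "u \<in> V" "w \<in> V" "layer w = layer u + Suc d" for u w d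
    using that
  proof (induction d arbitrary: w)
    case 0
    then show ?case using up by simp
  next
    case (Suc d)
    have "layer w \<le> n" using layers Suc.prems(2) by blast
    then have "layer u + Suc d \<in> layer ` V" using layers Suc.prems(3) by simp
    then obtain v where v: "v \<in> V" "layer v = layer u + Suc d" by auto
    then have "s u < s v" using Suc.IH Suc.prems(1) by blast
    also have "s v < s w" using up[OF v(1) Suc.prems(2)] Suc.prems(3) v(2) by simp
    finally show ?case .
  qed
  show ?thesis
  proof (rule inj_onI, rule ccontr)
    fix u w assume u: "u \<in> V" and w: "w \<in> V" and eq: "s u = s w" and ne: "u \<noteq> w"
    consider "layer u = layer w" | "layer u < layer w" | "layer w < layer u" by linarith
    then show False
    proof cases
      case 1
      then show False using within[OF u w _ ne] eq by simp
    next
      case 2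
      then obtain d where "layer w = layer u + Suc d" using less_iff_Suc_add by auto
      then show False using mono[OF u w] eq by simp
    next
      case 3
      then obtain d where "layer u = layer w + Suc d" using less_iff_Suc_add by auto
      then show False using mono[OF w u] eq by simp
    qed
  qed
qed

lemma degree_less_card_if_simple_graph:
  assumes G: "simple_graph V E" and u: "u \<in> V"
  shows "degree E u < card V"
proof -
  have fin: "finite V" using G by (simp add: simple_graph_def)
  have "{e \<in> E. u \<in> e} \<subseteq> (\<lambda>v. {u, v}) ` (V - {u})"
  proof
    fix e assume e: "e \<in> {e \<in> E. u \<in> e}"
    then obtain a b where "a \<noteq> b" "a \<in> V" "b \<in> V" "e = {a, b}"
      using G unfolding simple_graph_def by blast
    with e show "e \<in> (\<lambda>v. {u, v}) ` (V - {u})" by (auto simp: insert_commute)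
  qed
  then have "degree E u \<le> card ((\<lambda>v. {u, v}) ` (V - {u}))"
    unfolding degree_def using fin by (simp add: card_mono)
  also have "\<dots> \<le> card (V - {u})" by (rule card_image_le) (use fin in simp)
  also have "\<dots> < card V" using fin u by (rule card_Diff1_less)
  finally show ?thesis .
qed

lemma bij_betw_incident_codes:
  assumes "bij_betw g K E"
  shows "bij_betw g {k \<in> K. v \<in> g k} {e \<in> E. v \<in> e}"
  using assms by (auto simp: bij_betw_def intro: inj_on_subset)

lemma degree_eq_card_codes:
  assumes "bij_betw g K E"
  shows "degree E v = card {k \<in> K. v \<in> g k}"
  unfolding degree_def using bij_betw_same_card[OF bij_betw_incident_codes[OF assms]] by simp

lemma antimagic_if_code_labelling:
  assumes g: "bij_betw g K E" and lab: "bij_betw lab K {1..card K}"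
    and inj: "inj_on (\<lambda>v. \<Sum>k \<in> {k \<in> K. v \<in> g k}. lab k) V"
  shows "antimagic V E"
proof -
  define f where "f = lab \<circ> inv_into K g"
  have "bij_betw f E {1..card K}"
    unfolding f_def using bij_betw_inv_into[OF g] lab by (rule bij_betw_trans)
  moreover have "card K = card E" using g by (rule bij_betw_same_card)
  moreover have "vertex_sum E f = (\<lambda>v. \<Sum>k \<in> {k \<in> K. v \<in> g k}. lab k)"
  proof
    fix v
    have "f (g k) = lab k" if "k \<in> K" for k
      unfolding f_def using g that by (simp add: bij_betw_def inv_into_f_f)
    then show "vertex_sum E f v = (\<Sum>k \<in> {k \<in> K. v \<in> g k}. lab k)"
      unfolding vertex_sum_def sum.reindex_bij_betw[OF bij_betw_incident_codes[OF g], symmetric]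
      by simp
  qed
  ultimately show ?thesis unfolding antimagic_def using inj by auto
qed

(* Codes for the edges of Gamma: Leg l j joins positions j - 1 and j of leg l, Internal i e is the
   copy of the edge e of H_i, and Far i v, Near i v join v in H_i to its attachment vertex farther
   from, resp. nearer to, v_0. *)
datatype 'a edge_code = Leg nat nat | Internal nat "'a set" | Far nat 'a | Near nat 'a

fun corona_edge :: "nat \<Rightarrow> 'a edge_code \<Rightarrow> ((nat \<times> nat) + (nat \<times> 'a)) set" where
  "corona_edge p (Leg l j) = {spv l j, spv l (j - 1)}"
| "corona_edge p (Internal i e) = (\<lambda>v. Inr (i, v)) ` e"
| "corona_edge p (Far i v) = {Inr (i, v), spv (att_leg i) (att_pos p i)}"
| "corona_edge p (Near i v) = {Inr (i, v), spv (att_leg i) (att_pos p i - 1)}"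

definition edge_codes :: "nat \<Rightarrow> (nat \<Rightarrow> 'a set) \<Rightarrow> (nat \<Rightarrow> 'a set set) \<Rightarrow> 'a edge_code set" where
  "edge_codes p VH EH = {Leg l j | l j. l < 3 \<and> 1 \<le> j \<and> j \<le> p}
     \<union> {Internal i e | i e. i \<in> {1..3*p} \<and> e \<in> EH i}
     \<union> {Far i v | i v. i \<in> {1..3*p} \<and> v \<in> VH i}
     \<union> {Near i v | i v. i \<in> {1..3*p} \<and> v \<in> VH i}"

lemma spv_pos: "1 \<le> j \<Longrightarrow> spv l j = Inl (l, j)"
  by (simp add: spv_def)
lemma spv_0[simp]: "spv l 0 = Inl (0, 0)"
  by (simp add: spv_def)
lemma spv_neq_Inr[simp]: "spv l j \<noteq> Inr x" "Inr x \<noteq> spv l j"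
  by (auto simp: spv_def)

lemma spv_eq_Inl: "spv l' j' = Inl (l, j) \<longleftrightarrow> (1 \<le> j' \<and> l' = l \<and> j' = j) \<or> (j' = 0 \<and> l = 0 \<and> j = 0)"
  by (auto simp: spv_def)

abbreviation att_index :: "nat \<Rightarrow> nat \<Rightarrow> nat \<Rightarrow> nat" where
  "att_index p l j \<equiv> 3*(p-j)+l+1"

lemma att_pos_bounds:
  assumes "i \<in> {1..3*p}"
  shows "1 \<le> att_pos p i" "att_pos p i \<le> p"
proof -
  have "(i - 1) div 3 < p" using assms by auto
  then show "1 \<le> att_pos p i" "att_pos p i \<le> p" unfolding att_pos_def by auto
qed

lemma att_leg_pos_eq_iff:
  assumes "i \<in> {1..3*p}" "l < 3" "1 \<le> j" "j \<le> p"
  shows "(att_leg i = l \<and> att_pos p i = j) \<longleftrightarrow> i = att_index p l j"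
proof
  assume h: "att_leg i = l \<and> att_pos p i = j"
  have "(i - 1) div 3 < p" using assms by auto
  then have "(i - 1) div 3 = p - j" using h unfolding att_pos_def by auto
  moreover have "(i-1) mod 3 = l" using h unfolding att_leg_def by auto
  moreover have "i - 1 = 3 * ((i - 1) div 3) + (i-1) mod 3" by simp
  ultimately show "i = att_index p l j" using assms(1) by auto
next
  assume h: "i = att_index p l j"
  then have "i - 1 = 3*(p-j)+l" by simp
  then have "(i-1) div 3 = p - j" "(i-1) mod 3 = l" using assms(2) by auto
  then show "att_leg i = l \<and> att_pos p i = j" unfolding att_leg_def att_pos_def using assms by auto
qed

lemma att_leg_pos_pred_eq_iff:
  assumes "i \<in> {1..3*p}" "l < 3" "1 \<le> j" "j \<le> p"
  shows "(att_leg i = l \<and> att_pos p i - 1 = j) \<longleftrightarrow> (j < p \<and> i = att_index p l (j+1))"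
proof -
  have b: "1 \<le> att_pos p i" "att_pos p i \<le> p" using att_pos_bounds[OF assms(1)] by auto
  show ?thesis
  proof
    assume h: "att_leg i = l \<and> att_pos p i - 1 = j"
    then have "att_pos p i = j + 1" using b assms by auto
    then have "j < p" using b by auto
    then show "j < p \<and> i = att_index p l (j+1)" using att_leg_pos_eq_iff[OF assms(1,2), of "j+1"] h \<open>att_pos p i = j + 1\<close> by auto
  next
    assume h: "j < p \<and> i = att_index p l (j+1)"
    then have "att_leg i = l \<and> att_pos p i = j + 1" using att_leg_pos_eq_iff[OF assms(1,2), of "j+1"] by auto
    then show "att_leg i = l \<and> att_pos p i - 1 = j" by auto
  qed
qed

lemma att_pos_eq_1_iff:
  assumes "i \<in> {1..3*p}"
  shows "att_pos p i = 1 \<longleftrightarrow> 3*p - 2 \<le> i"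
proof -
  have "(i - 1) div 3 < p" using assms by auto
  moreover have "(i - 1) div 3 = p - 1 \<longleftrightarrow> 3*p - 2 \<le> i"
  proof
    assume "(i - 1) div 3 = p - 1"
    then have "3 * (p - 1) \<le> i - 1" by (metis div_times_less_eq_dividend mult.commute)
    then show "3*p - 2 \<le> i" using assms by auto
  next
    assume "3*p - 2 \<le> i"
    then have "3 * (p - 1) \<le> i - 1" using assms by auto
    then have "p - 1 \<le> (i - 1) div 3" by (metis div_le_mono nonzero_mult_div_cancel_left zero_neq_numeral)
    then show "(i - 1) div 3 = p - 1" using \<open>(i - 1) div 3 < p\<close> by auto
  qed
  ultimately show ?thesis unfolding att_pos_def by auto
qed

(* In increasing order: for i = 1, 2, 3 the internal, near and far edges of H_i followed by the
   outermost edge of leg i - 1; the internal and near edges of H_4, ..., H_{3p-3}; their far edges;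
   the leg edges not at v_0 (by 3(p - j) + l); the internal and far edges of H_{3p-2}, H_{3p-1},
   H_{3p}; the edges at v_0. *)
fun tier :: "nat \<Rightarrow> 'a edge_code \<Rightarrow> nat" where
  "tier p (Internal i e) = (if i \<le> 3 then 4*(i-1) else if i \<le> 3*p-3 then 12+2*i else 13+12*p)"
| "tier p (Near i v) = (if i \<le> 3 then 4*(i-1)+1 else if i \<le> 3*p-3 then 13+2*i else 14+12*p)"
| "tier p (Far i v) = (if i \<le> 3 then 4*(i-1)+2 else if i \<le> 3*p-3 then 12+6*p+i else 13+12*p)"
| "tier p (Leg l j) = (if 3*(p-j)+l \<le> 2 then 4*(3*(p-j)+l)+3
     else if 3*(p-j)+l \<le> 3*p-4 then 13+9*p+(3*(p-j)+l) else 14+12*p)"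

(* A vertex of H_i owns its far edge if i <= 3p - 3 and its near edge otherwise; x_1, y_1, z_1 own
   their edges to v_0. *)
fun tiebreak :: "nat \<Rightarrow> 'a edge_code \<Rightarrow> bool" where
  "tiebreak p (Internal i e) = False"
| "tiebreak p (Near i v) = (3*p-2 \<le> i)"
| "tiebreak p (Far i v) = (i \<le> 3*p-3)"
| "tiebreak p (Leg l j) = (j = 1)"

fun owner :: "'a edge_code \<Rightarrow> (nat \<times> nat) + (nat \<times> 'a)" where
  "owner (Leg l j) = spv l j"
| "owner (Internal i e) = Inl (0, 0)"
| "owner (Far i v) = Inr (i, v)"
| "owner (Near i v) = Inr (i, v)"

locale spider_corona =
  fixes p :: nat and VH :: "nat \<Rightarrow> 'a set" and EH :: "nat \<Rightarrow> 'a set set"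
  assumes p: "p > 2"
    and simple: "\<And>i. i \<in> {1..3*p} \<Longrightarrow> simple_graph (VH i) (EH i)"
    and card_ge_2: "\<And>i. i \<in> {1..3*p} \<Longrightarrow> card (VH i) \<ge> 2"
    and card_sorted: "\<And>i. i \<in> {1..<3*p} \<Longrightarrow> card (VH i) \<le> card (VH (Suc i))"
    and cond_i: "\<And>i. i \<in> {1..<3*p} \<Longrightarrow> max_degree (VH i) (EH i) \<le> min_degree (VH (Suc i)) (EH (Suc i))"
    and cond_ii_x: "degree (corona_E p VH EH) (spv 0 p) \<le> min_degree' p VH EH 2"
    and cond_ii_y: "degree (corona_E p VH EH) (spv 1 p) \<le> min_degree' p VH EH 3"
    and cond_ii_z: "degree (corona_E p VH EH) (spv 2 p) \<le> min_degree' p VH EH 4"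
    and cond_iii: "max_degree' p VH EH (3*p - 3) \<le> card (VH 4) + 1"
    and cond_iv: "degree (corona_E p VH EH) (spv 2 2) \<le> min_degree' p VH EH (3*p - 2)"
begin

abbreviation "K \<equiv> edge_codes p VH EH"
abbreviation "E \<equiv> corona_E p VH EH"
abbreviation "V \<equiv> corona_V p VH"

lemma finite_VH: "i \<in> {1..3*p} \<Longrightarrow> finite (VH i)"
  using simple unfolding simple_graph_def by auto

lemma EH_edge: "i \<in> {1..3*p} \<Longrightarrow> e \<in> EH i \<Longrightarrow> \<exists>u v. u \<noteq> v \<and> u \<in> VH i \<and> v \<in> VH i \<and> e = {u, v}"
  using simple unfolding simple_graph_def by auto

lemma finite_EH: "i \<in> {1..3*p} \<Longrightarrow> finite (EH i)"
proof -
  assume i: "i \<in> {1..3*p}"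
  have "EH i \<subseteq> Pow (VH i)" using EH_edge[OF i] by blast
  then show ?thesis using finite_VH[OF i] by (simp add: finite_subset)
qed

lemma VH_nonempty: "i \<in> {1..3*p} \<Longrightarrow> VH i \<noteq> {}"
  using card_ge_2[of i] by auto

lemma finite_K: "finite K"
proof -
  have "K \<subseteq> (\<lambda>(l, j). Leg l j) ` ({..<3} \<times> {..p})
      \<union> (\<Union>i\<in>{1..3*p}. Internal i ` EH i \<union> Far i ` VH i \<union> Near i ` VH i)"
    unfolding edge_codes_def by auto
  then show ?thesis by (rule finite_subset) (use finite_EH finite_VH in auto)
qed

lemma corona_edge_image_Leg:
  "corona_edge p ` {Leg l j :: 'a edge_code | l j. l < 3 \<and> 1 \<le> j \<and> j \<le> p} = {{spv l j, spv l (Suc j)} | l j. l < 3 \<and> j < p}"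
proof -
  have eq: "{Leg l j :: 'a edge_code | l j. l < 3 \<and> 1 \<le> j \<and> j \<le> p} = {Leg l (Suc j) | l j. l < 3 \<and> j < p}"
  proof (intro set_eqI iffI)
    fix k :: "'a edge_code" assume "k \<in> {Leg l j | l j. l < 3 \<and> 1 \<le> j \<and> j \<le> p}"
    then obtain l j where "k = Leg l j" "l < 3" "1 \<le> j" "j \<le> p" by blast
    then have "k = Leg l (Suc (j - 1))" "l < 3" "j - 1 < p" by auto
    then show "k \<in> {Leg l (Suc j) | l j. l < 3 \<and> j < p}" by blast
  qed auto
  have "corona_edge p (Leg l (Suc j)) = {spv l j, spv l (Suc j)}" for l j
    by (simp add: insert_commute)
  then show ?thesis unfolding eq by blast
qed

lemma corona_edge_image_Internal:
  "corona_edge p ` {Internal i e | i e. i \<in> {1..3*p} \<and> e \<in> EH i}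
    = {{Inr (i, u), Inr (i, v)} | i u v. i \<in> {1..3*p} \<and> {u, v} \<in> EH i}"
proof (intro set_eqI iffI)
  fix x :: "((nat \<times> nat) + (nat \<times> 'a)) set" assume "x \<in> corona_edge p ` {Internal i e | i e. i \<in> {1..3*p} \<and> e \<in> EH i}"
  then obtain i e where "x = (\<lambda>v. Inr (i, v)) ` e" "i \<in> {1..3*p}" "e \<in> EH i" by auto
  moreover obtain u v where "e = {u, v}" using EH_edge calculation(2,3) by blast
  ultimately show "x \<in> {{Inr (i, u), Inr (i, v)} | i u v. i \<in> {1..3*p} \<and> {u, v} \<in> EH i}" by auto
next
  fix x :: "((nat \<times> nat) + (nat \<times> 'a)) set" assume "x \<in> {{Inr (i, u), Inr (i, v)} | i u v. i \<in> {1..3*p} \<and> {u, v} \<in> EH i}"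
  then obtain i u v where "x = corona_edge p (Internal i {u, v})" "i \<in> {1..3*p}" "{u, v} \<in> EH i" by auto
  then show "x \<in> corona_edge p ` {Internal i e | i e. i \<in> {1..3*p} \<and> e \<in> EH i}" by blast
qed

lemma corona_E_eq_image: "E = corona_edge p ` K"
proof -
  have "corona_edge p ` {Far i v | i v. i \<in> {1..3*p} \<and> v \<in> VH i}
      = {{Inr (i, v), spv (att_leg i) (att_pos p i)} | i v. i \<in> {1..3*p} \<and> v \<in> VH i}"
    "corona_edge p ` {Near i v | i v. i \<in> {1..3*p} \<and> v \<in> VH i}
      = {{Inr (i, v), spv (att_leg i) (att_pos p i - 1)} | i v. i \<in> {1..3*p} \<and> v \<in> VH i}"
    by force+
  then show ?thesis
    unfolding corona_E_def edge_codes_def image_Un corona_edge_image_Leg corona_edge_image_Internal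
    by simp
qed

lemma K_cases:
  assumes "k \<in> K"
  obtains (leg) l j where "k = Leg l j" "l < 3" "1 \<le> j" "j \<le> p"
  | (internal) i e where "k = Internal i e" "i \<in> {1..3*p}" "e \<in> EH i"
  | (far) i v where "k = Far i v" "i \<in> {1..3*p}" "v \<in> VH i"
  | (near) i v where "k = Near i v" "i \<in> {1..3*p}" "v \<in> VH i"
  using assms unfolding edge_codes_def by blast

lemma inj_on_corona_edge: "inj_on (corona_edge p) K"
proof (rule inj_onI)
  fix a b assume a: "a \<in> K" and b: "b \<in> K" and eq: "corona_edge p a = corona_edge p b"
  from a show "a = b"
  proof (cases rule: K_cases)
    case (leg l j)
    from b show ?thesis
      by (cases rule: K_cases) (use eq leg EH_edge in \<open>auto simp: spv_def doubleton_eq_iff split: if_splits\<close>)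
  next
    case (internal i e)
    obtain x where x: "x \<in> e" using EH_edge[OF internal(2,3)] by blast
    from b show ?thesis
    proof (cases rule: K_cases)
      case (internal i' e')
      have "Inr (i, x) \<in> corona_edge p b" using x unfolding eq[symmetric] \<open>a = Internal i e\<close> by simp
      then have "i' = i" using \<open>b = Internal i' e'\<close> by auto
      then have "(\<lambda>v. Inr (i, v) :: (nat \<times> nat) + (nat \<times> 'a)) ` e = (\<lambda>v. Inr (i, v)) ` e'"
        using eq \<open>a = Internal i e\<close> \<open>b = Internal i' e'\<close> by simp
      moreover have "inj (\<lambda>v. Inr (i, v) :: (nat \<times> nat) + (nat \<times> 'a))" by (auto intro: injI)
      ultimately have "e = e'" by (simp add: inj_image_eq_iff)
      then show ?thesis using \<open>a = Internal i e\<close> \<open>b = Internal i' e'\<close> \<open>i' = i\<close> by simp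
    qed (use eq \<open>a = Internal i e\<close> x in \<open>auto simp: spv_def split: if_splits\<close>)
  next
    case (far i v)
    from b show ?thesis
      by (cases rule: K_cases)
        (use eq far att_pos_bounds[OF far(2)] EH_edge in \<open>auto simp: spv_def doubleton_eq_iff split: if_splits\<close>)
  next
    case (near i v)
    from b show ?thesis
      by (cases rule: K_cases)
        (use eq near att_pos_bounds[OF near(2)] EH_edge in \<open>auto simp: spv_def doubleton_eq_iff split: if_splits\<close>)
  qed
qed

definition incident :: "(nat \<times> nat) + (nat \<times> 'a) \<Rightarrow> 'a edge_code set" where
  "incident v = {k \<in> K. v \<in> corona_edge p k}"

lemma leg_vertex_mem_corona_edge_iff:
  assumes k: "k \<in> K" and l: "l < 3" and j: "1 \<le> j" "j \<le> p"
  shows "spv l j \<in> corona_edge p k \<longleftrightarrow>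
    (k = Leg l j \<or> (j < p \<and> k = Leg l (Suc j)) \<or> (\<exists>v. k = Far (att_index p l j) v)
     \<or> (\<exists>v. j < p \<and> k = Near (att_index p l (j+1)) v))"
proof -
  have sj: "spv l j = Inl (l, j)" using j by (simp add: spv_pos)
  from k show ?thesis
  proof (cases rule: K_cases)
    case (leg l' j')
    have "spv l j \<in> corona_edge p k \<longleftrightarrow> (l' = l \<and> j' = j) \<or> (l' = l \<and> j' = Suc j)"
      unfolding sj leg(1) corona_edge.simps using leg j by (auto simp: spv_def)
    then show ?thesis using leg by auto
  next
    case (internal i e)
    then show ?thesis by auto
  next
    case (far i v)
    have "spv l j \<in> corona_edge p k \<longleftrightarrow> spv (att_leg i) (att_pos p i) = (Inl (l, j) :: (nat \<times> nat) + (nat \<times> 'a))"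
      unfolding sj far(1) corona_edge.simps by auto
    also have "\<dots> \<longleftrightarrow> att_leg i = l \<and> att_pos p i = j"
      using att_pos_bounds[OF far(2)] j by (auto simp: spv_eq_Inl)
    also have "\<dots> \<longleftrightarrow> i = att_index p l j" using att_leg_pos_eq_iff[OF far(2) l j] .
    finally show ?thesis using far by auto
  next
    case (near i v)
    have "spv l j \<in> corona_edge p k \<longleftrightarrow> spv (att_leg i) (att_pos p i - 1) = (Inl (l, j) :: (nat \<times> nat) + (nat \<times> 'a))"
      unfolding sj near(1) corona_edge.simps by auto
    also have "\<dots> \<longleftrightarrow> att_leg i = l \<and> att_pos p i - 1 = j"
      using j by (auto simp: spv_eq_Inl)
    also have "\<dots> \<longleftrightarrow> (j < p \<and> i = att_index p l (j+1))" using att_leg_pos_pred_eq_iff[OF near(2) l j] .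
    finally show ?thesis using near by auto
  qed
qed

lemma centre_mem_corona_edge_iff:
  assumes k: "k \<in> K"
  shows "spv 0 0 \<in> corona_edge p k \<longleftrightarrow>
    ((\<exists>l. l < 3 \<and> k = Leg l 1) \<or> (\<exists>i v. 3*p-2 \<le> i \<and> k = Near i v))"
proof -
  from k show ?thesis
  proof (cases rule: K_cases)
    case (leg l' j')
    have "spv 0 0 \<in> corona_edge p k \<longleftrightarrow> j' = 1"
      unfolding leg(1) corona_edge.simps using leg by (auto simp: spv_def)
    then show ?thesis using leg by auto
  next
    case (internal i e)
    then show ?thesis by auto
  next
    case (far i v)
    have "spv 0 0 \<notin> corona_edge p k"
      unfolding far(1) corona_edge.simps using att_pos_bounds[OF far(2)] by (auto simp: spv_def)
    then show ?thesis using far by auto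
  next
    case (near i v)
    have "spv 0 0 \<in> corona_edge p k \<longleftrightarrow> att_pos p i = 1"
      unfolding near(1) corona_edge.simps using att_pos_bounds[OF near(2)] by (auto simp: spv_def)
    also have "\<dots> \<longleftrightarrow> 3*p-2 \<le> i" using att_pos_eq_1_iff[OF near(2)] .
    finally show ?thesis using near by auto
  qed
qed

lemma incident_H:
  assumes i: "i \<in> {1..3*p}" and u: "u \<in> VH i"
  shows "incident (Inr (i, u)) = Internal i ` {e \<in> EH i. u \<in> e} \<union> {Far i u, Near i u}"
proof (rule set_eqI)
  fix k
  show "k \<in> incident (Inr (i, u)) \<longleftrightarrow> k \<in> Internal i ` {e \<in> EH i. u \<in> e} \<union> {Far i u, Near i u}"
  proof
    assume "k \<in> incident (Inr (i, u))"
    then have k: "k \<in> K" "Inr (i, u) \<in> corona_edge p k" unfolding incident_def by auto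
    from k(1) show "k \<in> Internal i ` {e \<in> EH i. u \<in> e} \<union> {Far i u, Near i u}"
      by (cases rule: K_cases) (use k(2) in auto)
  next
    assume "k \<in> Internal i ` {e \<in> EH i. u \<in> e} \<union> {Far i u, Near i u}"
    then show "k \<in> incident (Inr (i, u))" unfolding incident_def edge_codes_def using i u by auto
  qed
qed

lemma incident_leg:
  assumes l: "l < 3" and j: "1 \<le> j" "j \<le> p"
  shows "incident (spv l j) = {Leg l j} \<union> (if j < p then {Leg l (Suc j)} else {})
     \<union> Far (att_index p l j) ` VH (att_index p l j)
     \<union> (if j < p then Near (att_index p l (j+1)) ` VH (att_index p l (j+1)) else {})" (is "_ = ?S")
proof (rule set_eqI)
  fix k
  have "att_index p l j \<in> {1..3*p}" "j < p \<Longrightarrow> att_index p l (j+1) \<in> {1..3*p}" using l j by auto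
  then have "k \<in> ?S \<longleftrightarrow> k \<in> K \<and> (k = Leg l j \<or> (j < p \<and> k = Leg l (Suc j))
      \<or> (\<exists>v. k = Far (att_index p l j) v) \<or> (\<exists>v. j < p \<and> k = Near (att_index p l (j+1)) v))"
    unfolding edge_codes_def using l j by (auto split: if_splits)
  then show "k \<in> incident (spv l j) \<longleftrightarrow> k \<in> ?S"
    unfolding incident_def using leg_vertex_mem_corona_edge_iff[OF _ l j] by blast
qed

lemma incident_centre:
  "incident (spv 0 0) = (\<lambda>l. Leg l 1) ` {..<3} \<union> (\<Union>i\<in>{3*p-2..3*p}. Near i ` VH i)" (is "_ = ?S")
proof (rule set_eqI)
  fix k
  have "k \<in> ?S \<longleftrightarrow> k \<in> K \<and> ((\<exists>l. l < 3 \<and> k = Leg l 1) \<or> (\<exists>i v. 3*p-2 \<le> i \<and> k = Near i v))"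
    unfolding edge_codes_def using p by auto
  then show "k \<in> incident (spv 0 0) \<longleftrightarrow> k \<in> ?S"
    unfolding incident_def using centre_mem_corona_edge_iff by blast
qed

definition idx :: "'a edge_code \<Rightarrow> nat" where "idx = (SOME h. inj_on h K)"

lemma inj_idx: "inj_on idx K"
proof -
  have "\<exists>h::'a edge_code \<Rightarrow> nat. inj_on h K" using finite_imp_inj_to_nat_seg[OF finite_K] by blast
  then show ?thesis unfolding idx_def by (rule someI_ex)
qed

(* Within a tier the tie-breaking edges come after all other edges, so the labels of the other
   edges are already those of lab0 (lemma lab_eq_lab0); this is what allows key to order the
   tie-breaking edges by partial sums of lab0. *)
definition slot :: "'a edge_code \<Rightarrow> nat" where
  "slot k = 2 * tier p k + (if tiebreak p k then 1 else 0)"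

definition key0 :: "'a edge_code \<Rightarrow> nat \<times> nat \<times> nat" where
  "key0 k = (slot k, 0, idx k)"

definition lab0 :: "'a edge_code \<Rightarrow> nat" where
  "lab0 = rank K key0"

definition partial_sum :: "(nat \<times> nat) + (nat \<times> 'a) \<Rightarrow> nat" where
  "partial_sum v = sum lab0 {k \<in> incident v. \<not> tiebreak p k}"

definition key :: "'a edge_code \<Rightarrow> nat \<times> nat \<times> nat" where
  "key k = (slot k, if tiebreak p k then partial_sum (owner k) else 0, idx k)"

definition lab :: "'a edge_code \<Rightarrow> nat" where
  "lab = rank K key"

definition vsum :: "(nat \<times> nat) + (nat \<times> 'a) \<Rightarrow> nat" where
  "vsum v = sum lab (incident v)"

lemma bij_betw_lab: "bij_betw lab K {1..card K}"
proof -
  have "inj_on key K" using inj_idx unfolding key_def inj_on_def by auto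
  then show ?thesis unfolding lab_def using finite_K by (rule bij_betw_rank[rotated])
qed

lemma lab_pos: "0 < lab k"
  unfolding lab_def rank_def by simp

lemma lab_less_if_tier_less: "k \<in> K \<Longrightarrow> tier p k < tier p k' \<Longrightarrow> lab k < lab k'"
  unfolding lab_def by (rule rank_less_rank[OF finite_K]) (auto simp: key_def slot_def)

lemma lab_less_if_partial_sum_less:
  "k \<in> K \<Longrightarrow> tiebreak p k \<Longrightarrow> tiebreak p k' \<Longrightarrow> tier p k = tier p k'
   \<Longrightarrow> partial_sum (owner k) < partial_sum (owner k') \<Longrightarrow> lab k < lab k'"
  unfolding lab_def by (rule rank_less_rank[OF finite_K]) (auto simp: key_def slot_def)

lemma lab_eq_lab0:
  assumes "\<not> tiebreak p k"
  shows "lab k = lab0 k"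
proof -
  have "key k' < key k \<longleftrightarrow> key0 k' < key0 k" for k'
  proof (cases "slot k' = slot k")
    case True
    then have "tiebreak p k' = tiebreak p k"
      unfolding slot_def by (cases "tiebreak p k'"; cases "tiebreak p k"; simp; presburger)
    then show ?thesis using assms True by (simp add: key_def key0_def)
  next
    case False
    then show ?thesis using assms by (auto simp: key_def key0_def)
  qed
  then show ?thesis unfolding lab_def lab0_def rank_def by simp
qed

lemma bij_betw_corona_edge: "bij_betw (corona_edge p) K E"
  unfolding bij_betw_def using inj_on_corona_edge corona_E_eq_image by simp

lemma finite_incident: "finite (incident v)"
  unfolding incident_def using finite_K by simp

lemma incident_subset: "incident v \<subseteq> K"
  unfolding incident_def by blast

lemma degree_eq_card_incident: "degree E v = card (incident v)"
  unfolding incident_def by (rule degree_eq_card_codes[OF bij_betw_corona_edge])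

lemma card_VH_mono: "1 \<le> i \<Longrightarrow> i \<le> j \<Longrightarrow> j \<le> 3*p \<Longrightarrow> card (VH i) \<le> card (VH j)"
proof (induction j)
  case 0
  then show ?case by simp
next
  case (Suc j)
  show ?case
  proof (cases "i = Suc j")
    case True
    then show ?thesis by simp
  next
    case False
    then have "i \<le> j" using Suc by simp
    then have "card (VH i) \<le> card (VH j)" using Suc by simp
    also have "\<dots> \<le> card (VH (Suc j))" using card_sorted[of j] Suc \<open>i \<le> j\<close> by simp
    finally show ?thesis .
  qed
qed

lemma degree_H_less_card:
  assumes "i \<in> {1..3*p}" "u \<in> VH i"
  shows "degree (EH i) u < card (VH i)"
  using degree_less_card_if_simple_graph[OF simple[OF assms(1)] assms(2)] .

lemma degree_H_le_next: assumes "i \<in> {1..<3*p}" "u \<in> VH i" "w \<in> VH (Suc i)"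
  shows "degree (EH i) u \<le> degree (EH (Suc i)) w"
proof -
  have i1: "i \<in> {1..3*p}" "Suc i \<in> {1..3*p}" using assms by auto
  have "degree (EH i) u \<le> max_degree (VH i) (EH i)"
    unfolding max_degree_def using finite_VH[OF i1(1)] assms(2) by simp
  also have "\<dots> \<le> min_degree (VH (Suc i)) (EH (Suc i))" using cond_i[OF assms(1)] .
  also have "\<dots> \<le> degree (EH (Suc i)) w"
    unfolding min_degree_def using finite_VH[OF i1(2)] assms(3) by simp
  finally show ?thesis .
qed

lemma degree_H_mono: "1 \<le> i \<Longrightarrow> i < j \<Longrightarrow> j \<le> 3*p \<Longrightarrow> u \<in> VH i \<Longrightarrow> w \<in> VH j
  \<Longrightarrow> degree (EH i) u \<le> degree (EH j) w"
proof (induction j arbitrary: w)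
  case 0
  then show ?case by simp
next
  case (Suc j)
  show ?case
  proof (cases "i = j")
    case True
    then show ?thesis using degree_H_le_next[of i u w] Suc by auto
  next
    case False
    then have ij: "i < j" using Suc by simp
    have "j \<in> {1..3*p}" using Suc ij by auto
    then obtain w' where w': "w' \<in> VH j" using VH_nonempty by blast
    have "degree (EH i) u \<le> degree (EH j) w'" using Suc.IH[OF Suc.prems(1) ij _ Suc.prems(4) w'] Suc.prems by simp
    also have "\<dots> \<le> degree (EH (Suc j)) w" using degree_H_le_next[of j w' w] Suc.prems w' ij by auto
    finally show ?thesis .
  qed
qed

lemma sum_lab_less_if_tier_less:
  assumes "A \<subseteq> K" "B \<subseteq> K" "card A \<le> card B" "B \<noteq> {}"
    and "\<And>a b. a \<in> A \<Longrightarrow> b \<in> B \<Longrightarrow> tier p a < tier p b"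
  shows "sum lab A < sum lab B"
  by (rule sum_less_sum_if_dominated)
    (use assms finite_subset[OF _ finite_K] lab_less_if_tier_less lab_pos in blast)+

lemma sum_lab_le_if_tier_less:
  assumes "A \<subseteq> K" "card A \<le> card B"
    and "\<And>a b. a \<in> A \<Longrightarrow> b \<in> B \<Longrightarrow> tier p a < tier p b"
  shows "sum lab A \<le> sum lab B"
  by (rule sum_le_sum_if_dominated) (use assms lab_less_if_tier_less in \<open>blast intro: less_imp_le\<close>)+

lemma sum_lab_le_vsum: "B \<subseteq> incident v \<Longrightarrow> sum lab B \<le> vsum v"
  unfolding vsum_def using finite_incident by (rule sum_mono2) auto

lemma vsum_less_vsum_if_dominated:
  assumes x: "incident x = A \<union> C" and y: "B \<union> D \<subseteq> incident y" "B \<inter> D = {}"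
    and card: "card A \<le> card B" and B: "B \<noteq> {}"
    and tier: "\<And>a b. a \<in> A \<Longrightarrow> b \<in> B \<Longrightarrow> tier p a < tier p b"
    and rest: "sum lab C \<le> sum lab D"
  shows "vsum x < vsum y"
proof -
  have fin: "finite A" "finite C" "finite B" "finite D"
    using finite_incident[of x] finite_incident[of y] x y(1) by (auto intro: finite_subset)
  have "vsum x \<le> sum lab A + sum lab C"
    unfolding vsum_def x using fin by (simp add: sum_Un_nat)
  also have "sum lab A < sum lab B"
    by (rule sum_lab_less_if_tier_less) (use x y incident_subset card B tier in blast)+
  also have "sum lab B + sum lab C \<le> sum lab (B \<union> D)"
    using rest fin y(2) by (simp add: sum.union_disjoint)
  also have "\<dots> \<le> vsum y" using y(1) by (rule sum_lab_le_vsum)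
  finally show ?thesis by simp
qed

lemma vsum_less_vsum_if_dominated_subset:
  assumes "B \<subseteq> incident y" "card (incident x) \<le> card B" "B \<noteq> {}"
    and "\<And>a b. a \<in> incident x \<Longrightarrow> b \<in> B \<Longrightarrow> tier p a < tier p b"
  shows "vsum x < vsum y"
  by (rule vsum_less_vsum_if_dominated[where C = "{}" and D = "{}"]) (use assms in auto)

definition internal_at :: "nat \<Rightarrow> 'a \<Rightarrow> 'a edge_code set" where
  "internal_at i u = Internal i ` {e \<in> EH i. u \<in> e}"

lemma internal_at_facts:
  assumes i: "i \<in> {1..3*p}" and u: "u \<in> VH i"
  shows "card (internal_at i u) = degree (EH i) u" "internal_at i u \<subseteq> K" "Far i u \<in> K" "Near i u \<in> K"
    "finite (internal_at i u)" "Far i u \<notin> internal_at i u" "Near i u \<notin> internal_at i u"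
    "incident (Inr (i, u)) = internal_at i u \<union> {Far i u, Near i u}"
    "\<And>k. k \<in> internal_at i u \<Longrightarrow> tier p k = tier p (Internal i {})"
proof -
  have "inj_on (Internal i) {e \<in> EH i. u \<in> e}" by (auto intro: inj_onI)
  then show "card (internal_at i u) = degree (EH i) u" unfolding internal_at_def degree_def by (simp add: card_image)
  show "internal_at i u \<subseteq> K" unfolding internal_at_def edge_codes_def using i by auto
  show "Far i u \<in> K" "Near i u \<in> K" unfolding edge_codes_def using i u by auto
  show "finite (internal_at i u)" unfolding internal_at_def using finite_EH[OF i] by simp
  show "Far i u \<notin> internal_at i u" "Near i u \<notin> internal_at i u" unfolding internal_at_def by auto
  show "incident (Inr (i, u)) = internal_at i u \<union> {Far i u, Near i u}" unfolding internal_at_def using incident_H[OF i u] .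
  show "\<And>k. k \<in> internal_at i u \<Longrightarrow> tier p k = tier p (Internal i {})" unfolding internal_at_def by auto
qed

lemma vsum_H:
  assumes i: "i \<in> {1..3*p}" and u: "u \<in> VH i"
  shows "vsum (Inr (i, u)) = sum lab (internal_at i u) + lab (Far i u) + lab (Near i u)"
proof -
  note F = internal_at_facts[OF i u]
  have "vsum (Inr (i, u)) = sum lab (internal_at i u \<union> {Far i u, Near i u})" unfolding vsum_def F(8) ..
  also have "\<dots> = sum lab (internal_at i u) + sum lab {Far i u, Near i u}"
    by (rule sum.union_disjoint) (use F in auto)
  finally show ?thesis by simp
qed

lemma card_incident_H:
  assumes i: "i \<in> {1..3*p}" and u: "u \<in> VH i"
  shows "card (incident (Inr (i, u))) = degree (EH i) u + 2"
proof -
  note F = internal_at_facts[OF i u]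
  have "card (incident (Inr (i, u))) = card (internal_at i u) + card {Far i u, Near i u}"
    unfolding F(8) by (rule card_Un_disjoint) (use F in auto)
  then show ?thesis using F(1) by simp
qed

lemma degree_corona_H: "i \<in> {1..3*p} \<Longrightarrow> u \<in> VH i \<Longrightarrow> degree E (Inr (i, u)) = degree (EH i) u + 2"
  using card_incident_H degree_eq_card_incident by simp

lemma Far_Near_image_facts:
  assumes i: "i \<in> {1..3*p}"
  shows "card (Far i ` VH i) = card (VH i)" "card (Near i ` VH i) = card (VH i)"
    "Far i ` VH i \<subseteq> K" "Near i ` VH i \<subseteq> K" "finite (Far i ` VH i)" "finite (Near i ` VH i)"
    "Far i ` VH i \<noteq> {}" "Near i ` VH i \<noteq> {}"
proof -
  show "card (Far i ` VH i) = card (VH i)" "card (Near i ` VH i) = card (VH i)"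
    by (auto intro!: card_image inj_onI)
  show "Far i ` VH i \<subseteq> K" "Near i ` VH i \<subseteq> K" unfolding edge_codes_def using i by auto
  show "finite (Far i ` VH i)" "finite (Near i ` VH i)" using finite_VH[OF i] by auto
  show "Far i ` VH i \<noteq> {}" "Near i ` VH i \<noteq> {}" using VH_nonempty[OF i] by auto
qed

lemma incident_inner_leg:
  assumes l: "l < 3" and j: "1 \<le> j" "j < p"
  defines "b \<equiv> att_index p l j" and "a \<equiv> att_index p l (j+1)"
  shows "incident (spv l j) = {Leg l j, Leg l (Suc j)} \<union> Far b ` VH b \<union> Near a ` VH a"
    "vsum (spv l j) = lab (Leg l j) + lab (Leg l (Suc j)) + sum lab (Far b ` VH b) + sum lab (Near a ` VH a)"
    "card (incident (spv l j)) = 2 + card (VH b) + card (VH a)"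
    "b \<in> {1..3*p}" "a \<in> {1..3*p}" "b = a + 3"
proof -
  show Ieq: "incident (spv l j) = {Leg l j, Leg l (Suc j)} \<union> Far b ` VH b \<union> Near a ` VH a"
    unfolding incident_leg[OF l j(1) less_imp_le[OF j(2)]] b_def a_def using j by auto
  show bi: "b \<in> {1..3*p}" "a \<in> {1..3*p}" "b = a + 3" unfolding b_def a_def using l j by auto
  note fb = Far_Near_image_facts[OF bi(1)] and fa = Far_Near_image_facts[OF bi(2)]
  have d1: "{Leg l j, Leg l (Suc j)} \<inter> Far b ` VH b = {}" by auto
  have d2: "({Leg l j, Leg l (Suc j)} \<union> Far b ` VH b) \<inter> Near a ` VH a = {}" by auto
  have "vsum (spv l j) = sum lab ({Leg l j, Leg l (Suc j)} \<union> Far b ` VH b) + sum lab (Near a ` VH a)"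
    unfolding vsum_def Ieq by (rule sum.union_disjoint) (use fa fb d2 in auto)
  also have "sum lab ({Leg l j, Leg l (Suc j)} \<union> Far b ` VH b) = sum lab {Leg l j, Leg l (Suc j)} + sum lab (Far b ` VH b)"
    by (rule sum.union_disjoint) (use fb d1 in auto)
  finally show "vsum (spv l j) = lab (Leg l j) + lab (Leg l (Suc j)) + sum lab (Far b ` VH b) + sum lab (Near a ` VH a)"
    by simp
  have "card (incident (spv l j)) = card ({Leg l j, Leg l (Suc j)} \<union> Far b ` VH b) + card (Near a ` VH a)"
    unfolding Ieq by (rule card_Un_disjoint) (use fa fb d2 in auto)
  also have "card ({Leg l j, Leg l (Suc j)} \<union> Far b ` VH b) = card {Leg l j :: 'a edge_code, Leg l (Suc j)} + card (Far b ` VH b)"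
    by (rule card_Un_disjoint) (use fb d1 in auto)
  finally show "card (incident (spv l j)) = 2 + card (VH b) + card (VH a)" using fa fb by simp
qed

lemma incident_leg_end:
  assumes l: "l < 3"
  shows "incident (spv l p) = {Leg l p} \<union> Far (l+1) ` VH (l+1)"
proof -
  have "1 \<le> p" using p by simp
  then show ?thesis unfolding incident_leg[OF l \<open>1 \<le> p\<close> order_refl] by simp
qed

lemma vsum_H_less_leg_end:
  assumes i: "i \<in> {1,2,3}" and u: "u \<in> VH i"
  shows "vsum (Inr (i, u)) < vsum (spv (i-1) p)"
proof -
  have i': "i \<in> {1..3*p}" using i p by auto
  note F = internal_at_facts[OF i' u]
  define A where "A = insert (Near i u) (internal_at i u)"
  define B where "B = insert (Leg (i-1) p) (Far i ` (VH i - {u}))"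
  have "card (Far i ` (VH i - {u})) = card (VH i) - 1"
    using u finite_VH[OF i'] by (simp add: card_image inj_on_def)
  then have "card B = card (VH i)"
    unfolding B_def using finite_VH[OF i'] card_ge_2[OF i'] by (subst card_insert_disjoint) auto
  then have card: "card A \<le> card B"
    unfolding A_def using F degree_H_less_card[OF i' u] by simp
  have "i - 1 < 3" "i - 1 + 1 = i" using i by auto
  then have Isp: "incident (spv (i-1) p) = {Leg (i-1) p} \<union> Far i ` VH i"
    using incident_leg_end[of "i-1"] by simp
  show ?thesis
  proof (rule vsum_less_vsum_if_dominated[where A = A and B = B and C = "{Far i u}" and D = "{Far i u}"])
    show "incident (Inr (i, u)) = A \<union> {Far i u}" unfolding A_def F(8) by auto
    show "B \<union> {Far i u} \<subseteq> incident (spv (i-1) p)" unfolding B_def Isp using u by auto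
    show "tier p a < tier p b" if "a \<in> A" "b \<in> B" for a b
      using that F(9) i unfolding A_def B_def by auto
  qed (use card in \<open>auto simp: B_def\<close>)
qed

lemma card_incident_leg_end_le:
  assumes "i \<in> {1,2,3}"
  shows "card (incident (spv (i-1) p)) \<le> min_degree' p VH EH (i+1)"
  using assms cond_ii_x cond_ii_y cond_ii_z by (auto simp: degree_eq_card_incident numeral_eq_Suc)

lemma vsum_leg_end_less_H:
  assumes i: "i \<in> {1,2,3}" and w: "w \<in> VH (i+1)"
  shows "vsum (spv (i-1) p) < vsum (Inr (i+1, w))"
proof (rule vsum_less_vsum_if_dominated_subset[OF order_refl])
  have i': "i+1 \<in> {1..3*p}" using i p by auto
  note F = internal_at_facts[OF i' w]
  have "card (incident (spv (i-1) p)) \<le> min_degree' p VH EH (i+1)"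
    using card_incident_leg_end_le[OF i] .
  also have "\<dots> \<le> degree E (Inr (i+1, w))"
    unfolding min_degree'_def using finite_VH[OF i'] w by simp
  finally show "card (incident (spv (i-1) p)) \<le> card (incident (Inr (i+1, w)))"
    by (simp add: degree_eq_card_incident)
  show "incident (Inr (i+1, w)) \<noteq> {}" using F(8) by auto
  have "i - 1 < 3" "i - 1 + 1 = i" using i by auto
  then have Isp: "incident (spv (i-1) p) = {Leg (i-1) p} \<union> Far i ` VH i"
    using incident_leg_end[of "i-1"] by simp
  show "tier p a < tier p b" if "a \<in> incident (spv (i-1) p)" "b \<in> incident (Inr (i+1, w))" for a b
  proof -
    have "tier p a \<le> 4*(i-1)+3" using that(1) i unfolding Isp by auto
    moreover have "4*i \<le> tier p b" using that(2) i p F(9) unfolding F(8) by auto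
    ultimately show ?thesis using i by auto
  qed
qed

lemma vsum_H_less_next_H:
  assumes i: "4 \<le> i" "i + 1 \<le> 3*p-3" and u: "u \<in> VH i" and w: "w \<in> VH (i+1)"
  shows "vsum (Inr (i, u)) < vsum (Inr (i+1, w))"
proof -
  have i': "i \<in> {1..3*p}" "i+1 \<in> {1..3*p}" using i by auto
  note Fu = internal_at_facts[OF i'(1) u] and Fw = internal_at_facts[OF i'(2) w]
  have "sum lab (internal_at i u) \<le> sum lab (internal_at (i+1) w)"
  proof (rule sum_lab_le_if_tier_less[OF Fu(2)])
    show "card (internal_at i u) \<le> card (internal_at (i+1) w)" unfolding Fu(1) Fw(1)
      using degree_H_le_next[of i u w] i u w by auto
    fix a b assume "a \<in> internal_at i u" "b \<in> internal_at (i+1) w"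
    then show "tier p a < tier p b" using Fu(9) Fw(9) i by auto
  qed
  moreover have "lab (Far i u) < lab (Far (i+1) w)" using Fu(3) Fw(3) i by (intro lab_less_if_tier_less) auto
  moreover have "lab (Near i u) < lab (Near (i+1) w)" using Fu(4) Fw(4) i by (intro lab_less_if_tier_less) auto
  ultimately show ?thesis using vsum_H[OF i'(1) u] vsum_H[OF i'(2) w] by simp
qed

lemma vsum_H_3p3_less_inner_leg:
  assumes u: "u \<in> VH (3*p-3)" and l: "l < 3" and j: "2 \<le> j" "j < p"
  shows "vsum (Inr (3*p-3, u)) < vsum (spv l j)"
proof -
  define q where "q = 3*p-3"
  define b where "b = att_index p l j"
  have q: "q \<in> {1..3*p}" "4 \<le> q" "u \<in> VH q" unfolding q_def using p u by auto
  have b: "b \<in> {1..3*p}" "4 \<le> b" "b \<le> q" unfolding b_def q_def using j l by auto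
  note F = internal_at_facts[OF q(1,3)] and Fb = Far_Near_image_facts[OF b(1)]
  define A where "A = insert (Near q u) (internal_at q u)"
  have "degree E (Inr (q, u)) \<le> max_degree' p VH EH q"
    unfolding max_degree'_def using finite_VH[OF q(1)] q(3) by simp
  then have "degree (EH q) u + 1 \<le> card (VH 4)"
    using cond_iii degree_corona_H[OF q(1,3)] unfolding q_def by simp
  also have "\<dots> \<le> card (VH b)" using card_VH_mono b by auto
  finally have card: "card A \<le> card (Far b ` VH b)" unfolding A_def using F Fb by simp
  have "lab (Far q u) < lab (Leg l j)"
    by (rule lab_less_if_tier_less) (use F j l q(2) in \<open>auto simp: q_def\<close>)
  then show ?thesis unfolding q_def[symmetric]
  proof (intro vsum_less_vsum_if_dominated[where A = A and B = "Far b ` VH b"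
        and C = "{Far q u}" and D = "{Leg l j}"])
    show "incident (Inr (q, u)) = A \<union> {Far q u}" unfolding A_def F(8) by auto
    show "Far b ` VH b \<union> {Leg l j} \<subseteq> incident (spv l j)"
      using incident_inner_leg(1)[OF l _ j(2)] j unfolding b_def by auto
    show "tier p a < tier p c" if "a \<in> A" "c \<in> Far b ` VH b" for a c
      using that F(9) q b unfolding A_def q_def by auto
  qed (use card Fb in auto)
qed

lemma card_incident_inner_leg:
  assumes l: "l < 3" and j: "2 \<le> j" "j < p"
  shows "card (incident (spv l j)) \<le> min_degree' p VH EH (3*p-2)"
proof -
  have j1: "1 \<le> j" using j by simp
  have p22: "(2::nat) < p" using p by simp
  have "card (incident (spv l j)) = 2 + card (VH (att_index p l j)) + card (VH (att_index p l (j+1)))"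
    using incident_inner_leg(3)[OF l j1 j(2)] .
  also have "\<dots> \<le> 2 + card (VH (att_index p 2 2)) + card (VH (att_index p 2 (2+1)))"
  proof -
    have "card (VH (att_index p l j)) \<le> card (VH (att_index p 2 2))" using l j by (intro card_VH_mono) auto
    moreover have "card (VH (att_index p l (j+1))) \<le> card (VH (att_index p 2 (2+1)))" using l j by (intro card_VH_mono) auto
    ultimately show ?thesis by simp
  qed
  also have "\<dots> = card (incident (spv 2 2))" using incident_inner_leg(3)[of 2 2] p22 by simp
  also have "\<dots> = degree E (spv 2 2)" using degree_eq_card_incident by simp
  also have "\<dots> \<le> min_degree' p VH EH (3*p-2)" using cond_iv .
  finally show ?thesis .
qed

lemma tier_incident_inner_leg:
  assumes l: "l < 3" and j: "2 \<le> j" "j < p" and k: "k \<in> incident (spv l j)"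
  shows "tier p k < 13 + 12*p"
proof -
  have j1: "1 \<le> j" using j by simp
  have "k \<in> {Leg l j, Leg l (Suc j)} \<union> Far (att_index p l j) ` VH (att_index p l j) \<union> Near (att_index p l (j+1)) ` VH (att_index p l (j+1))"
    using incident_inner_leg(1)[OF l j1 j(2)] k by simp
  then show ?thesis using l j by auto
qed

lemma min_degree_last_le:
  assumes i: "3*p-2 \<le> i" "i \<le> 3*p" and w: "w \<in> VH i"
  shows "min_degree' p VH EH (3*p-2) \<le> degree (EH i) w + 2"
proof -
  have i0: "3*p-2 \<in> {1..3*p}" using p by auto
  obtain a0 where a0: "a0 \<in> VH (3*p-2)" "degree (EH (3*p-2)) a0 \<le> degree (EH i) w"
  proof (cases "i = 3*p-2")
    case True
    then show ?thesis using that w by auto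
  next
    case False
    obtain a0 where "a0 \<in> VH (3*p-2)" using VH_nonempty[OF i0] by blast
    moreover have "degree (EH (3*p-2)) a0 \<le> degree (EH i) w"
      using degree_H_mono[of "3*p-2" i a0 w] calculation False i w p by auto
    ultimately show ?thesis using that by blast
  qed
  have "min_degree' p VH EH (3*p-2) \<le> degree E (Inr (3*p-2, a0))"
    unfolding min_degree'_def using finite_VH[OF i0] a0 by simp
  also have "\<dots> = degree (EH (3*p-2)) a0 + 2" using degree_corona_H[OF i0 a0(1)] .
  finally show ?thesis using a0 by simp
qed

lemma min_degree_last_le_card: "min_degree' p VH EH (3*p-2) \<le> card (VH (3*p-2)) + 1"
proof -
  have i0: "3*p-2 \<in> {1..3*p}" using p by auto
  obtain a0 where a0: "a0 \<in> VH (3*p-2)" using VH_nonempty[OF i0] by blast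
  have "min_degree' p VH EH (3*p-2) \<le> degree E (Inr (3*p-2, a0))"
    unfolding min_degree'_def using finite_VH[OF i0] a0 by simp
  also have "\<dots> = degree (EH (3*p-2)) a0 + 2" using degree_corona_H[OF i0 a0] .
  finally show ?thesis using degree_H_less_card[OF i0 a0] by simp
qed

lemma vsum_inner_leg_less_last_H:
  assumes l: "l < 3" and j: "2 \<le> j" "j < p" and i: "3*p-2 \<le> i" "i \<le> 3*p" and w: "w \<in> VH i"
  shows "vsum (spv l j) < vsum (Inr (i, w))"
proof (rule vsum_less_vsum_if_dominated_subset[OF order_refl])
  have i': "i \<in> {1..3*p}" using i p by auto
  note F = internal_at_facts[OF i' w]
  have "card (incident (spv l j)) \<le> min_degree' p VH EH (3*p-2)" using card_incident_inner_leg[OF l j] .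
  also have "\<dots> \<le> degree (EH i) w + 2" using min_degree_last_le[OF i w] .
  finally show "card (incident (spv l j)) \<le> card (incident (Inr (i, w)))" using card_incident_H[OF i' w] by simp
  show "incident (Inr (i, w)) \<noteq> {}" using F(8) by auto
  show "tier p a < tier p b" if "a \<in> incident (spv l j)" "b \<in> incident (Inr (i, w))" for a b
    using tier_incident_inner_leg[OF l j that(1)] that(2) F(9) i p unfolding F(8) by auto
qed

lemma vsum_inner_leg_less_leg_start:
  assumes l: "l < 3" and j: "2 \<le> j" "j < p" and l': "l' < 3"
  shows "vsum (spv l j) < vsum (spv l' 1)"
proof -
  define b where "b = att_index p l' 1"
  have b: "b \<in> {1..3*p}" "3*p-2 \<le> b" unfolding b_def using l' p by auto
  note Fb = Far_Near_image_facts[OF b(1)]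
  show ?thesis
  proof (rule vsum_less_vsum_if_dominated_subset[where B = "insert (Leg l' 1) (Far b ` VH b)"])
    show "insert (Leg l' 1) (Far b ` VH b) \<subseteq> incident (spv l' 1)"
      using incident_inner_leg(1)[OF l' order_refl] p unfolding b_def by auto
    have "card (incident (spv l j)) \<le> min_degree' p VH EH (3*p-2)" using card_incident_inner_leg[OF l j] .
    also have "\<dots> \<le> card (VH (3*p-2)) + 1" using min_degree_last_le_card .
    also have "\<dots> \<le> card (VH b) + 1" using card_VH_mono[of "3*p-2" b] b p by simp
    also have "\<dots> = card (insert (Leg l' 1) (Far b ` VH b))"
      using Fb by (subst card_insert_disjoint) auto
    finally show "card (incident (spv l j)) \<le> card (insert (Leg l' 1) (Far b ` VH b))" .
    show "tier p a < tier p c" if "a \<in> incident (spv l j)" "c \<in> insert (Leg l' 1) (Far b ` VH b)" for a c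
      using tier_incident_inner_leg[OF l j that(1)] that(2) b l' p by auto
  qed simp
qed

lemma tier_incident_centre: "k \<in> incident (spv 0 0) \<Longrightarrow> tier p k = 14 + 12*p"
  unfolding incident_centre using p by auto

lemma card_incident_centre: "2 + card (VH (3*p)) + card (VH (3*p-1)) \<le> card (incident (spv 0 0))"
proof -
  have i1: "3*p \<in> {1..3*p}" "3*p-1 \<in> {1..3*p}" using p by auto
  note F1 = Far_Near_image_facts[OF i1(1)] and F2 = Far_Near_image_facts[OF i1(2)]
  define S where "S = insert (Leg 0 1) (insert (Leg 1 1) (Near (3*p) ` VH (3*p) \<union> Near (3*p-1) ` VH (3*p-1)))"
  have u1: "Near (3*p) ` VH (3*p) \<subseteq> (\<Union>i\<in>{3*p-2..3*p}. Near i ` VH i)" by (rule UN_upper) (use p in auto)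
  have u2: "Near (3*p-1) ` VH (3*p-1) \<subseteq> (\<Union>i\<in>{3*p-2..3*p}. Near i ` VH i)" by (rule UN_upper) (use p in auto)
  have "S \<subseteq> incident (spv 0 0)" unfolding S_def incident_centre using u1 u2 by auto
  then have "card S \<le> card (incident (spv 0 0))" using finite_incident by (rule card_mono[rotated])
  moreover have "card S = 2 + card (VH (3*p)) + card (VH (3*p-1))"
  proof -
    have d: "Near (3*p) ` VH (3*p) \<inter> Near (3*p-1) ` VH (3*p-1) = {}" using p by auto
    have "card (Near (3*p) ` VH (3*p) \<union> Near (3*p-1) ` VH (3*p-1)) = card (VH (3*p)) + card (VH (3*p-1))"
      using card_Un_disjoint[OF F1(6) F2(6) d] F1 F2 by simp
    moreover have "finite (Near (3*p) ` VH (3*p) \<union> Near (3*p-1) ` VH (3*p-1))" using F1 F2 by simp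
    moreover have "Leg 1 1 \<notin> Near (3*p) ` VH (3*p) \<union> Near (3*p-1) ` VH (3*p-1)" by auto
    moreover have "Leg 0 1 \<notin> insert (Leg 1 1) (Near (3*p) ` VH (3*p) \<union> Near (3*p-1) ` VH (3*p-1))" by auto
    ultimately show ?thesis unfolding S_def by simp
  qed
  ultimately show ?thesis by simp
qed

lemma vsum_last_H_less_centre:
  assumes i: "3*p-2 \<le> i" "i \<le> 3*p" and w: "w \<in> VH i"
  shows "vsum (Inr (i, w)) < vsum (spv 0 0)"
proof -
  have i': "i \<in> {1..3*p}" using i p by auto
  note F = internal_at_facts[OF i' w]
  define A where "A = insert (Far i w) (internal_at i w)"
  define B where "B = incident (spv 0 0) - {Near i w}"
  have shared: "Near i w \<in> incident (spv 0 0)" unfolding incident_centre using i w by auto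
  have "card A \<le> card (VH i)" unfolding A_def using F degree_H_less_card[OF i' w] by simp
  also have "\<dots> \<le> card (VH (3*p))" using card_VH_mono[of i "3*p"] i' by simp
  also have "\<dots> \<le> card B"
    unfolding B_def using shared finite_incident card_incident_centre card_ge_2[of "3*p-1"] p by simp
  finally have card: "card A \<le> card B" .
  show ?thesis
  proof (rule vsum_less_vsum_if_dominated[where A = A and B = B and C = "{Near i w}" and D = "{Near i w}"])
    show "incident (Inr (i, w)) = A \<union> {Near i w}" unfolding A_def F(8) by auto
    show "B \<union> {Near i w} \<subseteq> incident (spv 0 0)" unfolding B_def using shared by auto
    show "B \<noteq> {}" using card unfolding A_def using F by auto
    show "tier p a < tier p b" if "a \<in> A" "b \<in> B" for a b
      using that tier_incident_centre F(9) i p unfolding A_def B_def by auto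
  qed (use card in \<open>auto simp: B_def\<close>)
qed

lemma vsum_leg_start_less_centre:
  assumes l: "l < 3"
  shows "vsum (spv l 1) < vsum (spv 0 0)"
proof -
  define b where "b = att_index p l 1"
  define a where "a = att_index p l 2"
  have Isp: "incident (spv l 1) = {Leg l 1, Leg l 2} \<union> Far b ` VH b \<union> Near a ` VH a"
    using incident_inner_leg(1)[OF l order_refl] p unfolding a_def b_def by (simp add: numeral_2_eq_2)
  have card_Isp: "card (incident (spv l 1)) = 2 + card (VH b) + card (VH a)"
    using incident_inner_leg(3)[OF l order_refl] p unfolding a_def b_def by (simp add: numeral_2_eq_2)
  have ab: "b \<in> {1..3*p}" "a \<in> {1..3*p}" "3*p-2 \<le> b" "4 \<le> a" "a \<le> 3*p-3"
    unfolding a_def b_def using l p by auto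
  define A where "A = incident (spv l 1) - {Leg l 1}"
  define B where "B = incident (spv 0 0) - {Leg l 1}"
  have shared: "Leg l 1 \<in> incident (spv l 1)" "Leg l 1 \<in> incident (spv 0 0)"
    unfolding Isp incident_centre using l by auto
  have card_A: "card A = 1 + card (VH b) + card (VH a)" unfolding A_def using card_Isp shared finite_incident by simp
  also have "\<dots> \<le> 1 + card (VH (3*p)) + card (VH (3*p-1))"
  proof -
    have "card (VH b) \<le> card (VH (3*p))" "card (VH a) \<le> card (VH (3*p-1))"
      using ab by (auto intro: card_VH_mono)
    then show ?thesis by simp
  qed
  also have "\<dots> \<le> card B" unfolding B_def using shared finite_incident card_incident_centre by simp
  finally have card: "card A \<le> card B" .
  show ?thesis
  proof (rule vsum_less_vsum_if_dominated[where A = A and B = B and C = "{Leg l 1}" and D = "{Leg l 1}"])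
    show "incident (spv l 1) = A \<union> {Leg l 1}" unfolding A_def using shared by auto
    show "B \<union> {Leg l 1} \<subseteq> incident (spv 0 0)" unfolding B_def using shared by auto
    show "B \<noteq> {}" using card card_A by auto
    show "tier p x < tier p y" if "x \<in> A" "y \<in> B" for x y
      using that tier_incident_centre ab l p unfolding A_def B_def Isp by (auto split: if_splits)
  qed (use card in \<open>auto simp: B_def\<close>)
qed

lemma vsum_neq_by_tiebreak:
  assumes tx: "tx \<in> K" and ty: "ty \<in> K"
    and Sx: "{k \<in> incident x. tiebreak p k} = {tx}" and Sy: "{k \<in> incident y. tiebreak p k} = {ty}"
    and tt: "tier p tx = tier p ty" and ox: "owner tx = x" and oy: "owner ty = y" and xy: "x \<noteq> y"
  shows "vsum x \<noteq> vsum y"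
proof -
  have sx: "tiebreak p tx" "tx \<in> incident x" using Sx by auto
  have sy: "tiebreak p ty" "ty \<in> incident y" using Sy by auto
  have sv: "vsum v = partial_sum v + lab t" if S: "{k \<in> incident v. tiebreak p k} = {t}" for v t
  proof -
    have t: "t \<in> incident v" "tiebreak p t" using S by auto
    have split: "incident v = {k \<in> incident v. \<not> tiebreak p k} \<union> {t}" using S by auto
    have "vsum v = sum lab {k \<in> incident v. \<not> tiebreak p k} + sum lab {t}"
      unfolding vsum_def by (subst split, rule sum.union_disjoint) (use finite_incident t in auto)
    moreover have "sum lab {k \<in> incident v. \<not> tiebreak p k} = partial_sum v"
      unfolding partial_sum_def by (rule sum.cong) (use incident_subset lab_eq_lab0 in auto)
    ultimately show ?thesis by simp
  qed
  have ex: "vsum x = partial_sum x + lab tx" using sv[OF Sx] .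
  have ey: "vsum y = partial_sum y + lab ty" using sv[OF Sy] .
  have "tx \<noteq> ty" using ox oy xy by auto
  then have ln: "lab tx \<noteq> lab ty" using bij_betw_imp_inj_on[OF bij_betw_lab] tx ty by (auto simp: inj_on_def)
  consider "partial_sum x < partial_sum y" | "partial_sum y < partial_sum x" | "partial_sum x = partial_sum y" by linarith
  then show ?thesis
  proof cases
    case 1
    then have "lab tx < lab ty" using lab_less_if_partial_sum_less[OF tx sx(1) sy(1) tt] ox oy by simp
    then show ?thesis using ex ey 1 by simp
  next
    case 2
    then have "lab ty < lab tx" using lab_less_if_partial_sum_less[OF ty sy(1) sx(1) tt[symmetric]] ox oy by simp
    then show ?thesis using ex ey 2 by simp
  next
    case 3
    then show ?thesis using ex ey ln by simp
  qed
qed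

lemma vsum_H_neq:
  assumes i: "1 \<le> i" "i \<le> 3*p-3" and u: "u \<in> VH i" and w: "w \<in> VH i" and uw: "u \<noteq> w"
  shows "vsum (Inr (i, u)) \<noteq> vsum (Inr (i, w))"
proof (rule vsum_neq_by_tiebreak)
  have i': "i \<in> {1..3*p}" using i by auto
  note Fu = internal_at_facts[OF i' u] and Fw = internal_at_facts[OF i' w]
  show "Far i u \<in> K" "Far i w \<in> K" using Fu Fw by auto
  show "{k \<in> incident (Inr (i, u)). tiebreak p k} = {Far i u}" unfolding Fu(8) internal_at_def using i by auto
  show "{k \<in> incident (Inr (i, w)). tiebreak p k} = {Far i w}" unfolding Fw(8) internal_at_def using i by auto
qed (use uw in auto)

definition top_layer :: "(nat \<times> nat) + (nat \<times> 'a) \<Rightarrow> bool" where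
  "top_layer x \<longleftrightarrow> (\<exists>i w. 3*p-2 \<le> i \<and> i \<le> 3*p \<and> w \<in> VH i \<and> x = Inr (i, w)) \<or> (\<exists>l<3. x = spv l 1)"

lemma top_layer_tiebreak_edge:
  assumes "top_layer x"
  shows "\<exists>t\<in>K. {k \<in> incident x. tiebreak p k} = {t} \<and> tier p t = 14 + 12*p \<and> owner t = x"
proof -
  from assms consider (h) i w where "3*p-2 \<le> i" "i \<le> 3*p" "w \<in> VH i" "x = Inr (i, w)"
    | (leg) l where "l < 3" "x = spv l 1" unfolding top_layer_def by blast
  then show ?thesis
  proof cases
    case h
    have i': "i \<in> {1..3*p}" using h p by auto
    note F = internal_at_facts[OF i' h(3)]
    have "{k \<in> incident x. tiebreak p k} = {Near i w}" unfolding h(4) F(8) internal_at_def using h p by auto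
    moreover have "tier p (Near i w) = 14 + 12*p" using h p by auto
    ultimately show ?thesis using F h by auto
  next
    case leg
    have p1: "1 < p" using p by simp
    have Isp: "incident (spv l 1) = {Leg l 1, Leg l (Suc 1)} \<union> Far (att_index p l 1) ` VH (att_index p l 1)
       \<union> Near (att_index p l (1+1)) ` VH (att_index p l (1+1))"
      using incident_inner_leg(1)[OF leg(1) order_refl p1] .
    have "{k \<in> incident x. tiebreak p k} = {Leg l 1}" unfolding leg(2) Isp using p leg(1) by auto
    moreover have "tier p (Leg l 1) = 14 + 12*p" using p leg(1) by auto
    moreover have "Leg l 1 \<in> K" using Isp incident_subset by auto
    ultimately show ?thesis using leg by auto
  qed
qed

lemma vsum_top_layer_neq: "top_layer x \<Longrightarrow> top_layer y \<Longrightarrow> x \<noteq> y \<Longrightarrow> vsum x \<noteq> vsum y"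
proof -
  assume "top_layer x" "top_layer y" "x \<noteq> y"
  obtain tx where tx: "tx \<in> K" "{k \<in> incident x. tiebreak p k} = {tx}" "tier p tx = 14 + 12*p" "owner tx = x"
    using top_layer_tiebreak_edge[OF \<open>top_layer x\<close>] by blast
  obtain ty where ty: "ty \<in> K" "{k \<in> incident y. tiebreak p k} = {ty}" "tier p ty = 14 + 12*p" "owner ty = y"
    using top_layer_tiebreak_edge[OF \<open>top_layer y\<close>] by blast
  show ?thesis using vsum_neq_by_tiebreak[OF tx(1) ty(1) tx(2) ty(2) _ tx(4) ty(4) \<open>x \<noteq> y\<close>] tx(3) ty(3) by simp
qed

lemma tier_inner_Leg_less:
  assumes "3*(p-j)+l < 3*(p-j')+l'" "3*(p-j')+l' \<le> 3*p-4"
  shows "tier p (Leg l j) < tier p (Leg l' j')"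
proof -
  define r where "r = 3*(p-j)+l"
  define r' where "r' = 3*(p-j')+l'"
  have "r < r'" "r' \<le> 3*p-4" using assms unfolding r_def r'_def by auto
  then show ?thesis unfolding tier.simps(4) r_def[symmetric] r'_def[symmetric] by auto
qed

lemma vsum_inner_leg_less:
  assumes l: "l < 3" "l' < 3" and j: "2 \<le> j" "j < p" "2 \<le> j'" "j' < p"
    and r: "3*(p-j)+l < 3*(p-j')+l'"
  shows "vsum (spv l j) < vsum (spv l' j')"
proof -
  define b where "b = att_index p l j"
  define a where "a = att_index p l (j+1)"
  define b' where "b' = att_index p l' j'"
  define a' where "a' = att_index p l' (j'+1)"
  have j1: "1 \<le> j" "1 \<le> j'" using j by auto
  note X = incident_inner_leg[OF l(1) j1(1) j(2), folded b_def a_def]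
  note Y = incident_inner_leg[OF l(2) j1(2) j(4), folded b'_def a'_def]
  have ab: "4 \<le> b" "b < b'" "b' \<le> 3*p-3" "1 \<le> a" "a < a'" "a' \<le> 3*p-6"
    unfolding a_def b_def a'_def b'_def using j l r by auto
  have "Leg l j \<in> K" "Leg l (Suc j) \<in> K" using X(1) incident_subset by auto
  then have "lab (Leg l j) < lab (Leg l' j')" "lab (Leg l (Suc j)) < lab (Leg l' (Suc j'))"
    using j l r by (auto intro!: lab_less_if_tier_less tier_inner_Leg_less)
  moreover have "sum lab (Far b ` VH b) < sum lab (Far b' ` VH b')"
    by (rule sum_lab_less_if_tier_less)
      (use Far_Near_image_facts[OF X(4)] Far_Near_image_facts[OF Y(4)]
        card_VH_mono[of b b'] ab in auto)
  moreover have "sum lab (Near a ` VH a) \<le> sum lab (Near a' ` VH a')"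
    by (rule sum_lab_le_if_tier_less)
      (use Far_Near_image_facts[OF X(5)] Far_Near_image_facts[OF Y(5)]
        card_VH_mono[of a a'] ab in \<open>auto split: if_splits\<close>)
  ultimately show ?thesis using X(2) Y(2) j by simp
qed

lemma leg_rank_inj:
  assumes "l < 3" "l' < 3" "j \<le> p" "j' \<le> p" "3*(p-j)+l = 3*(p-j')+l'"
  shows "l = l' \<and> j = j'"
proof -
  have "l = (3*(p-j)+l) mod 3" using assms(1) by auto
  also have "\<dots> = (3*(p-j')+l') mod 3" using assms(5) by simp
  also have "\<dots> = l'" using assms(2) by auto
  finally have "l = l'" .
  then have "p - j = p - j'" using assms(5) by simp
  then show ?thesis using \<open>l = l'\<close> assms by auto
qed

lemma V_cases:
  assumes "v \<in> V"
  obtains (centre) "v = Inl (0, 0)"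
  | (leg) l j where "l < 3" "1 \<le> j" "j \<le> p" "v = Inl (l, j)"
  | (H) i x where "i \<in> {1..3*p}" "x \<in> VH i" "v = Inr (i, x)"
proof -
  from assms consider (a) l j where "l < 3" "j \<le> p" "v = spv l j"
    | (b) i x where "i \<in> {1..3*p}" "x \<in> VH i" "v = Inr (i, x)"
    unfolding corona_V_def by blast
  then show ?thesis
  proof cases
    case a
    then show ?thesis using that by (cases "j = 0") (auto simp: spv_def)
  next
    case b
    then show ?thesis using that by blast
  qed
qed

lemma V_mem:
  "Inl (0, 0) \<in> V"
  "l < 3 \<Longrightarrow> 1 \<le> j \<Longrightarrow> j \<le> p \<Longrightarrow> Inl (l, j) \<in> V"
  "i \<in> {1..3*p} \<Longrightarrow> x \<in> VH i \<Longrightarrow> Inr (i, x) \<in> V"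
proof -
  have "(spv 0 0 :: (nat \<times> nat) + (nat \<times> 'a)) \<in> {spv l j | l j. l < 3 \<and> j \<le> p}"
    by (rule CollectI, rule exI[of _ 0], rule exI[of _ 0]) simp
  then have "(spv 0 0 :: (nat \<times> nat) + (nat \<times> 'a)) \<in> V" unfolding corona_V_def by (rule UnI1)
  then show "Inl (0, 0) \<in> V" by simp
  show "l < 3 \<Longrightarrow> 1 \<le> j \<Longrightarrow> j \<le> p \<Longrightarrow> Inl (l, j) \<in> V"
  proof -
    assume lj: "l < 3" "1 \<le> j" "j \<le> p"
    then have "(spv l j :: (nat \<times> nat) + (nat \<times> 'a)) \<in> {spv l j | l j. l < 3 \<and> j \<le> p}"
      by (intro CollectI exI conjI) auto
    then have "(spv l j :: (nat \<times> nat) + (nat \<times> 'a)) \<in> V" unfolding corona_V_def by (rule UnI1)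
    then show ?thesis using lj by (simp add: spv_pos)
  qed
  show "i \<in> {1..3*p} \<Longrightarrow> x \<in> VH i \<Longrightarrow> Inr (i, x) \<in> V" unfolding corona_V_def by blast
qed

definition layer :: "(nat \<times> nat) + (nat \<times> 'a) \<Rightarrow> nat" where
  "layer v = (case v of Inr (i, x) \<Rightarrow> (if i \<le> 3 then 2*(i-1) else if i \<le> 3*p-3 then i+2 else 3*p+1)
     | Inl (l, j) \<Rightarrow> (if j = 0 then 3*p+2 else if j = p then 2*l+1 else if 2 \<le> j then 3*p else 3*p+1))"

lemma layer_simps:
  "layer (Inr (i, x)) = (if i \<le> 3 then 2*(i-1) else if i \<le> 3*p-3 then i+2 else 3*p+1)"
  "layer (Inl (l, j)) = (if j = 0 then 3*p+2 else if j = p then 2*l+1 else if 2 \<le> j then 3*p else 3*p+1)"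
  unfolding layer_def by simp_all

lemma layer_image: "layer ` V = {..3*p+2}"
proof
  show "layer ` V \<subseteq> {..3*p+2}"
  proof
    fix c assume "c \<in> layer ` V"
    then obtain v where v: "v \<in> V" "c = layer v" by blast
    from v(1) show "c \<in> {..3*p+2}" by (cases rule: V_cases) (use v(2) in \<open>auto simp: layer_simps\<close>)
  qed
  have H: "layer (Inr (i, x)) \<in> layer ` V" if i: "i \<in> {1..3*p}" for i x
  proof -
    obtain y where "y \<in> VH i" using VH_nonempty[OF i] by blast
    then have "layer (Inr (i, y)) \<in> layer ` V" using V_mem(3)[OF i] by blast
    then show ?thesis by (simp add: layer_simps)
  qed
  have L: "layer (Inl (l, j)) \<in> layer ` V" if "l < 3" "1 \<le> j" "j \<le> p" for l j
    using V_mem(2)[OF that] by blast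
  show "{..3*p+2} \<subseteq> layer ` V"
  proof
    fix c assume "c \<in> {..3*p+2}"
    then consider "c \<in> {0, 2, 4}" | "c \<in> {1, 3, 5}" | "6 \<le> c \<and> c \<le> 3*p-1"
      | "c = 3*p" | "c = 3*p+1" | "c = 3*p+2" by fastforce
    then show "c \<in> layer ` V"
    proof cases
      case 1 then show ?thesis using H[of 1] H[of 2] H[of 3] p by (auto simp: layer_simps)
    next
      case 2 then show ?thesis using L[of 0 p] L[of 1 p] L[of 2 p] p by (auto simp: layer_simps)
    next
      case 3
      then have "c - 2 \<in> {1..3*p}" "\<And>x. layer (Inr (c - 2, x)) = c" by (auto simp: layer_simps)
      then show ?thesis using H by metis
    next
      case 4 then show ?thesis using L[of 0 2] p by (simp add: layer_simps)
    next
      case 5 then show ?thesis using L[of 0 1] p by (simp add: layer_simps)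
    next
      case 6 then show ?thesis using V_mem(1) by (force simp: layer_simps)
    qed
  qed
qed

lemma vsum_less_next_layer_leg:
  assumes u: "l < 3" "1 \<le> j" "j \<le> p" and w: "w \<in> V" and c: "layer w = Suc (layer (Inl (l, j)))"
  shows "vsum (Inl (l, j)) < vsum w"
proof -
  have "vsum (spv l j) < vsum w"
  using w proof (cases rule: V_cases)
    case centre
    then have "j = 1" using c u p by (auto simp: layer_simps split: if_splits; presburger?)
    then show ?thesis using vsum_leg_start_less_centre[OF u(1)] centre by (simp add: spv_pos)
  next
    case (leg l' j')
    then have "2 \<le> j \<and> j < p \<and> j' = 1" using c u p by (auto simp: layer_simps split: if_splits; presburger?)
    then show ?thesis using vsum_inner_leg_less_leg_start[OF u(1) _ _ leg(1)] leg by (simp add: spv_pos)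
  next
    case (H i y)
    then have "(j = p \<and> i = l + 2) \<or> (2 \<le> j \<and> j < p \<and> 3*p-2 \<le> i)"
      using c u p by (auto simp: layer_simps split: if_splits; presburger?)
    then show ?thesis
    proof
      assume "j = p \<and> i = l + 2"
      moreover have "l + 1 \<in> {1,2,3}" using u by auto
      ultimately show ?thesis using vsum_leg_end_less_H[of "l+1" y] H by simp
    next
      assume "2 \<le> j \<and> j < p \<and> 3*p-2 \<le> i"
      then show ?thesis using vsum_inner_leg_less_last_H[OF u(1)] H by auto
    qed
  qed
  then show ?thesis using u by (simp add: spv_pos)
qed

lemma vsum_less_next_layer_H:
  assumes u: "i \<in> {1..3*p}" "x \<in> VH i" and w: "w \<in> V" and c: "layer w = Suc (layer (Inr (i, x)))"
  shows "vsum (Inr (i, x)) < vsum w"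
  using w
proof (cases rule: V_cases)
  case centre
  then have "3*p-2 \<le> i" using c u p by (auto simp: layer_simps split: if_splits; presburger?)
  then show ?thesis using vsum_last_H_less_centre[of i x] u centre by auto
next
  case (leg l j)
  then have "(i \<le> 3 \<and> l = i - 1 \<and> j = p) \<or> (i = 3*p-3 \<and> 2 \<le> j \<and> j < p)"
    using c u p by (auto simp: layer_simps split: if_splits; presburger?)
  then show ?thesis
  proof
    assume a: "i \<le> 3 \<and> l = i - 1 \<and> j = p"
    then have "i \<in> {1,2,3}" using u by auto
    then show ?thesis using vsum_H_less_leg_end[of i x] u leg a by (simp add: spv_pos)
  next
    assume "i = 3*p-3 \<and> 2 \<le> j \<and> j < p"
    then show ?thesis using vsum_H_3p3_less_inner_leg[of x l j] u leg by (simp add: spv_pos)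
  qed
next
  case (H i' y)
  then have "4 \<le> i \<and> i + 1 \<le> 3*p-3 \<and> i' = i + 1"
    using c u p by (auto simp: layer_simps split: if_splits; presburger?)
  then show ?thesis using vsum_H_less_next_H[of i x y] u H by auto
qed

lemma vsum_less_next_layer:
  assumes u: "u \<in> V" and w: "w \<in> V" and c: "layer w = Suc (layer u)"
  shows "vsum u < vsum w"
  using u
proof (cases rule: V_cases)
  case centre
  have "layer w \<le> 3*p+2" using layer_image w by blast
  then show ?thesis using c centre by (simp add: layer_simps)
qed (use vsum_less_next_layer_leg vsum_less_next_layer_H w c in blast)+

lemma vsum_inner_leg_neq:
  assumes "l < 3" "l' < 3" "2 \<le> j" "j < p" "2 \<le> j'" "j' < p" "(l, j) \<noteq> (l', j')"
  shows "vsum (spv l j) \<noteq> vsum (spv l' j')"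
proof -
  have "3*(p-j)+l \<noteq> 3*(p-j')+l'" using leg_rank_inj[of l l' j j'] assms by auto
  then consider "3*(p-j)+l < 3*(p-j')+l'" | "3*(p-j')+l' < 3*(p-j)+l" by linarith
  then show ?thesis by cases (use vsum_inner_leg_less assms in \<open>fastforce+\<close>)
qed

lemma vsum_neq_same_layer_leg:
  assumes u: "l < 3" "1 \<le> j" "j \<le> p" and w: "w \<in> V"
    and c: "layer (Inl (l, j)) = layer w" and uw: "Inl (l, j) \<noteq> w"
  shows "vsum (Inl (l, j)) \<noteq> vsum w"
  using w
proof (cases rule: V_cases)
  case centre
  then show ?thesis using c u p by (auto simp: layer_simps split: if_splits)
next
  case (leg l' j')
  then consider "j = p" "j' = p" "l = l'" | "2 \<le> j" "j < p" "2 \<le> j'" "j' < p" | "j = 1" "j' = 1"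
    using c u p by (auto simp: layer_simps split: if_splits)
  then show ?thesis
  proof cases
    case 2
    then show ?thesis using vsum_inner_leg_neq[of l l' j j'] u leg uw by (simp add: spv_pos)
  next
    case 3
    then have "top_layer (Inl (l, j))" "top_layer w" unfolding top_layer_def using u leg by (auto simp: spv_pos)
    then show ?thesis using vsum_top_layer_neq uw by blast
  qed (use leg uw in simp)
next
  case (H i y)
  then have "j = 1 \<and> 3*p-2 \<le> i" using c u p by (auto simp: layer_simps split: if_splits; presburger?)
  then have "top_layer (Inl (l, j))" "top_layer w" unfolding top_layer_def using u H by (auto simp: spv_pos)
  then show ?thesis using vsum_top_layer_neq uw by blast
qed

lemma vsum_neq_same_layer_H:
  assumes u: "i \<in> {1..3*p}" "x \<in> VH i" and w: "w \<in> V"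
    and c: "layer (Inr (i, x)) = layer w" and uw: "Inr (i, x) \<noteq> w"
  shows "vsum (Inr (i, x)) \<noteq> vsum w"
  using w
proof (cases rule: V_cases)
  case centre
  then show ?thesis using c u p by (auto simp: layer_simps split: if_splits)
next
  case (leg l j)
  then have "j = 1 \<and> 3*p-2 \<le> i" using c u p by (auto simp: layer_simps split: if_splits; presburger?)
  then have "top_layer (Inr (i, x))" "top_layer w" unfolding top_layer_def using u leg by (auto simp: spv_pos)
  then show ?thesis using vsum_top_layer_neq uw by blast
next
  case (H i' y)
  then consider "i = i'" "i \<le> 3*p-3" | "3*p-2 \<le> i" "3*p-2 \<le> i'"
    using c u p by (auto simp: layer_simps split: if_splits)
  then show ?thesis
  proof cases
    case 1
    then show ?thesis using vsum_H_neq[of i x y] u H uw by auto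
  next
    case 2
    then have "top_layer (Inr (i, x))" "top_layer w" unfolding top_layer_def using u H by auto
    then show ?thesis using vsum_top_layer_neq uw by blast
  qed
qed

lemma vsum_neq_same_layer:
  assumes u: "u \<in> V" and w: "w \<in> V" and c: "layer u = layer w" and uw: "u \<noteq> w"
  shows "vsum u \<noteq> vsum w"
  using u
proof (cases rule: V_cases)
  case centre
  from w show ?thesis
    by (cases rule: V_cases) (use centre c uw p in \<open>auto simp: layer_simps split: if_splits\<close>)
qed (use vsum_neq_same_layer_leg vsum_neq_same_layer_H w c uw in blast)+

lemma inj_on_vsum: "inj_on vsum V"
  by (rule inj_on_by_layers[OF layer_image vsum_less_next_layer vsum_neq_same_layer])

lemma antimagic_corona: "antimagic V E"
proof (rule antimagic_if_code_labelling[OF bij_betw_corona_edge bij_betw_lab])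
  have "(\<lambda>v. \<Sum>k \<in> {k \<in> K. v \<in> corona_edge p k}. lab k) = vsum"
    by (rule ext) (simp add: vsum_def incident_def)
  then show "inj_on (\<lambda>v. \<Sum>k \<in> {k \<in> K. v \<in> corona_edge p k}. lab k) V"
    using inj_on_vsum by simp
qed

end

theorem theorem3:
  fixes p :: nat and VH :: "nat \<Rightarrow> 'a set" and EH :: "nat \<Rightarrow> 'a set set"
  assumes p: "p > 2"
    and graphs: "\<And>i. i \<in> {1..3*p} \<Longrightarrow> simple_graph (VH i) (EH i)"
    and conn: "\<And>i. i \<in> {1..3*p} \<Longrightarrow> graph_connected (VH i) (EH i)"
    and two: "\<And>i. i \<in> {1..3*p} \<Longrightarrow> card (VH i) \<ge> 2"
    and sorted: "\<And>i. i \<in> {1..<3*p} \<Longrightarrow> card (VH i) \<le> card (VH (Suc i))"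
    and c1: "\<And>i. i \<in> {1..<3*p} \<Longrightarrow> max_degree (VH i) (EH i) \<le> min_degree (VH (Suc i)) (EH (Suc i))"
    and c2x: "degree (corona_E p VH EH) (spv 0 p) \<le> min_degree' p VH EH 2"
    and c2y: "degree (corona_E p VH EH) (spv 1 p) \<le> min_degree' p VH EH 3"
    and c2z: "degree (corona_E p VH EH) (spv 2 p) \<le> min_degree' p VH EH 4"
    and c3: "max_degree' p VH EH (3*p - 3) \<le> card (VH 4) + 1"
    and c4: "degree (corona_E p VH EH) (spv 2 2) \<le> min_degree' p VH EH (3*p - 2)"
  shows "antimagic (corona_V p VH) (corona_E p VH EH)"
proof -
  interpret spider_corona p VH EH
    by (rule spider_corona.intro[OF p graphs two sorted c1 c2x c2y c2z c3 c4])
  show ?thesis by (rule antimagic_corona)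
qed

end
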